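(* Let $(X,\oplus,\odot,d)$ be any one of the spaces listed in the context, $\|x\|_{\mathcal F}=d(\tilde0,x)$. (i) If $A:X\to\mathbb{R}$ is linear and continuous at $\tilde0$, then $|A(x)|\le|||A|||_{\mathcal F}\|x\|_{\mathcal F}$ for all $x\in X$, and $|||A|||_{\mathcal F}=\sup\{|A(x)|:x\in X,\|x\|_{\mathcal F}\le1\}$. (ii) If $A:X\to X$ is linear and continuous at $\tilde0$, then $\|A(x)\|_{\mathcal F}\le|||A|||_{\mathcal F}\|x\|_{\mathcal F}$ for all $x\in X$, and $|||A|||_{\mathcal F}=\sup\{\|A(x)\|_{\mathcal F}:x\in X,\|x\|_{\mathcal F}\le1\}$.
   Context: Fuzzy numbers $\mathbb{R}_{\mathcal F}$: functions $u:\mathbb{R}\to[0,1]$ that are normal, fuzzy convex, upper semicontinuous, with compact support closure; level sets $[u]^r=[u_-(r),u_+(r)]$; $[u\oplus v]^r=[u]^r+[v]^r$, $[\lambda\odot u]^r=\lambda[u]^r$, $\tilde0=\chi_{\{0\}}$; $D(u,v)=\sup_{r\in[0,1]}\max\{|u_-(r)-v_-(r)|,|u_+(r)-v_+(r)|\}$. The admissible spaces $(X,\oplus,\odot,d)$ (operations pointwise/componentwise): $(\mathbb{R}_{\mathcal F},D)$; $C([a,b];\mathbb{R}_{\mathcal F})$ with sup-metric $D^*$; $L^p([a,b];\mathbb{R}_{\mathcal F})$ ($1\le p<\infty$) with $D_p(f,g)=(\int_a^bD(f,g)^p)^{1/p}$; $C^p([a,b];\mathbb{R}_{\mathcal F})$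 with $D_p^*(f,g)=\sum_{i=0}^pD^*(f^{(i)},g^{(i)})$; $l^p_{\mathbb{R}_{\mathcal F}}$ with $\rho_p(x,y)=(\sum_nD(x_n,y_n)^p)^{1/p}$; $m_{\mathbb{R}_{\mathcal F}}$, $c_{\mathbb{R}_{\mathcal F}}$, $c^{\tilde0}_{\mathbb{R}_{\mathcal F}}$ (bounded, convergent, null sequences) with $\mu(x,y)=\sup_nD(x_n,y_n)$; finite Cartesian products with max metric. Linear: for $A:X\to\mathbb{R}$, $A(x\oplus y)=A(x)+A(y)$, $A(\lambda\odot x)=\lambda A(x)$; for $A:X\to X$, $A(x\oplus y)=A(x)\oplus A(y)$, $A(\lambda\odot x)=\lambda\odot A(x)$ ($\lambda\in\mathbb{R}$). For such $A$ continuous at $\tilde0$, $\mathcal M_A=\{M>0:|A(x)|\le M\|x\|_{\mathcal F}\ \forall x\}$ (resp. $\{M>0:\|A(x)\|_{\mathcal F}\le M\|x\|_{\mathcal F}\ \forall x\}$) and $|||A|||_{\mathcal F}=\inf\mathcal M_A$. *)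

theory Defs
  imports "HOL-Analysis.Analysis"
begin

definition fuzzy_convex :: "(real \<Rightarrow> real) \<Rightarrow> bool" where
  "fuzzy_convex u \<longleftrightarrow>
     (\<forall>x y t. 0 \<le> t \<and> t \<le> 1 \<longrightarrow> min (u x) (u y) \<le> u (t * x + (1 - t) * y))"

definition usc_fun :: "(real \<Rightarrow> real) \<Rightarrow> bool" where
  "usc_fun u \<longleftrightarrow>
     (\<forall>x e. e > 0 \<longrightarrow> (\<exists>\<delta>>0. \<forall>y. \<bar>y - x\<bar> < \<delta> \<longrightarrow> u y < u x + e))"

definition is_fuzzy_number :: "(real \<Rightarrow> real) \<Rightarrow> bool" where
  "is_fuzzy_number u \<longleftrightarrow>
     (\<forall>x. 0 \<le> u x \<and> u x \<le> 1) \<and> (\<exists>x. u x = 1) \<and> fuzzy_convex u \<and> usc_fun u \<and>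
     compact (closure {x. u x > 0})"

lemma fuzzy_number_ex: "is_fuzzy_number (\<lambda>x. if x = 0 then 1 else 0)"
proof -
  have c: "{x::real. 0 < (if x = 0 then 1 else (0::real))} = {0}" by auto
  have u: "usc_fun (\<lambda>x::real. if x = 0 then 1 else (0::real))"
    unfolding usc_fun_def
  proof (intro allI impI)
    fix x e :: real assume e: "e > 0"
    show "\<exists>\<delta>>0. \<forall>y. \<bar>y - x\<bar> < \<delta> \<longrightarrow>
            (if y = 0 then 1 else 0) < (if x = 0 then 1 else (0::real)) + e"
    proof (cases "x = 0")
      case True then show ?thesis using e by (intro exI[of _ 1]) auto
    next
      case False then show ?thesis using e by (intro exI[of _ "\<bar>x\<bar>"]) auto
    qed
  qed
  show ?thesis unfolding is_fuzzy_number_def fuzzy_convex_def c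
    using u by auto
qed

typedef fuzzy = "{u. is_fuzzy_number u}" morphisms fmem Abs_fuzzy
  using fuzzy_number_ex by blast

definition level :: "fuzzy \<Rightarrow> real \<Rightarrow> real set" where
  "level u r = (if r = 0 then closure {x. fmem u x > 0} else {x. r \<le> fmem u x})"

definition lower :: "fuzzy \<Rightarrow> real \<Rightarrow> real" where
  "lower u r = Inf (level u r)"

definition upper :: "fuzzy \<Rightarrow> real \<Rightarrow> real" where
  "upper u r = Sup (level u r)"

definition fD :: "fuzzy \<Rightarrow> fuzzy \<Rightarrow> real" where
  "fD u v = (SUP r\<in>{0..1}. max \<bar>lower u r - lower v r\<bar> \<bar>upper u r - upper v r\<bar>)"

text \<open>Zadeh-extension operations (they satisfy the level-set identities of the paper).\<close>
definition fzero :: fuzzy where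
  "fzero = Abs_fuzzy (\<lambda>x. if x = 0 then 1 else 0)"

definition fadd :: "fuzzy \<Rightarrow> fuzzy \<Rightarrow> fuzzy" where
  "fadd u v = Abs_fuzzy (\<lambda>x. SUP y. min (fmem u y) (fmem v (x - y)))"

definition fscale :: "real \<Rightarrow> fuzzy \<Rightarrow> fuzzy" where
  "fscale c u = (if c = 0 then fzero else Abs_fuzzy (\<lambda>x. fmem u (x / c)))"

definition fcont_on :: "real set \<Rightarrow> (real \<Rightarrow> fuzzy) \<Rightarrow> bool" where
  "fcont_on S f \<longleftrightarrow>
     (\<forall>t\<in>S. \<forall>e>0. \<exists>\<delta>>0. \<forall>s\<in>S. \<bar>s - t\<bar> < \<delta> \<longrightarrow> fD (f s) (f t) < e)"

text \<open>Hukuhara derivative (Puri--Ralescu / Kaleva), one-sided at the endpoints of S.\<close>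
definition has_fhderiv_at :: "real set \<Rightarrow> (real \<Rightarrow> fuzzy) \<Rightarrow> fuzzy \<Rightarrow> real \<Rightarrow> bool" where
  "has_fhderiv_at S f g t \<longleftrightarrow>
     (\<forall>e>0. \<exists>\<delta>>0. \<forall>h. 0 < h \<and> h < \<delta> \<longrightarrow>
        (t + h \<in> S \<longrightarrow> (\<exists>w. f (t + h) = fadd (f t) w \<and> fD (fscale (1 / h) w) g < e)) \<and>
        (t - h \<in> S \<longrightarrow> (\<exists>w. f t = fadd (f (t - h)) w \<and> fD (fscale (1 / h) w) g < e)))"

definition fhdifferentiable_on :: "real set \<Rightarrow> (real \<Rightarrow> fuzzy) \<Rightarrow> bool" where
  "fhdifferentiable_on S f \<longleftrightarrow> (\<forall>t\<in>S. \<exists>g. has_fhderiv_at S f g t)"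

definition fhderiv :: "real set \<Rightarrow> (real \<Rightarrow> fuzzy) \<Rightarrow> real \<Rightarrow> fuzzy" where
  "fhderiv S f = (\<lambda>t. if t \<in> S then (THE g. has_fhderiv_at S f g t) else fzero)"

definition fCp_on :: "nat \<Rightarrow> real set \<Rightarrow> (real \<Rightarrow> fuzzy) \<Rightarrow> bool" where
  "fCp_on p S f \<longleftrightarrow>
     (\<forall>i\<le>p. fcont_on S ((fhderiv S ^^ i) f)) \<and>
     (\<forall>i<p. fhdifferentiable_on S ((fhderiv S ^^ i) f))"

definition fmeasurable_on :: "real \<Rightarrow> real \<Rightarrow> (real \<Rightarrow> fuzzy) \<Rightarrow> bool" where
  "fmeasurable_on a b f \<longleftrightarrow>
     (\<forall>r\<in>{0..1}. (\<lambda>t. lower (f t) r) \<in> borel_measurable (restrict_space lborel {a..b}) \<and>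
                 (\<lambda>t. upper (f t) r) \<in> borel_measurable (restrict_space lborel {a..b}))"

text \<open>A uniform carrier type: an element of a base space is a map
  (sequence index) \<Rightarrow> (time) \<Rightarrow> fuzzy number; unused arguments are ignored
  (the element is constant in them), function-space elements are fzero outside [a,b].\<close>
type_synonym felem = "nat \<Rightarrow> real \<Rightarrow> fuzzy"

datatype fspace =
    SpRF
  | SpC real real
  | SpL real real real        \<comment> \<open>L^p([a,b];R_F), parameters p a b\<close>
  | SpCp nat real real        \<comment> \<open>C^p([a,b];R_F), parameters p a b\<close>
  | Splp real
  | Spm
  | Spc
  | Spc0

fun valid_fspace :: "fspace \<Rightarrow> bool" where
  "valid_fspace SpRF = True"
| "valid_fspace (SpC a b) = (a < b)"
| "valid_fspace (SpL p a b) = (1 \<le> p \<and> a < b)"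
| "valid_fspace (SpCp p a b) = (a < b)"
| "valid_fspace (Splp p) = (1 \<le> p)"
| "valid_fspace Spm = True"
| "valid_fspace Spc = True"
| "valid_fspace Spc0 = True"

definition ext_on :: "real \<Rightarrow> real \<Rightarrow> (real \<Rightarrow> fuzzy) \<Rightarrow> felem" where
  "ext_on a b f = (\<lambda>n t. if t \<in> {a..b} then f t else fzero)"

fun bcarrier :: "fspace \<Rightarrow> felem set" where
  "bcarrier SpRF = {(\<lambda>n t. u) | u. True}"
| "bcarrier (SpC a b) = {ext_on a b f | f. fcont_on {a..b} f}"
| "bcarrier (SpL p a b) = {ext_on a b f | f. fmeasurable_on a b f \<and>
      (\<integral>\<^sup>+ t. indicator {a..b} t * ennreal (fD (f t) fzero powr p) \<partial>lborel) < \<infinity>}"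
| "bcarrier (SpCp p a b) = {ext_on a b f | f. fCp_on p {a..b} f}"
| "bcarrier (Splp p) = {(\<lambda>n t. x n) | x. summable (\<lambda>n. fD (x n) fzero powr p)}"
| "bcarrier Spm = {(\<lambda>n t. x n) | x. \<exists>B. \<forall>n. fD (x n) fzero \<le> B}"
| "bcarrier Spc = {(\<lambda>n t. x n) | x. \<exists>l. (\<lambda>n. fD (x n) l) \<longlonglongrightarrow> 0}"
| "bcarrier Spc0 = {(\<lambda>n t. x n) | x. (\<lambda>n. fD (x n) fzero) \<longlonglongrightarrow> 0}"

fun bdist :: "fspace \<Rightarrow> felem \<Rightarrow> felem \<Rightarrow> real" where
  "bdist SpRF x y = fD (x 0 0) (y 0 0)"
| "bdist (SpC a b) x y = (SUP t\<in>{a..b}. fD (x 0 t) (y 0 t))"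
| "bdist (SpL p a b) x y =
     enn2real (\<integral>\<^sup>+ t. indicator {a..b} t * ennreal (fD (x 0 t) (y 0 t) powr p) \<partial>lborel) powr (1 / p)"
| "bdist (SpCp p a b) x y =
     (\<Sum>i\<le>p. SUP t\<in>{a..b}. fD (((fhderiv {a..b}) ^^ i) (x 0) t) (((fhderiv {a..b}) ^^ i) (y 0) t))"
| "bdist (Splp p) x y = (\<Sum>n. fD (x n 0) (y n 0) powr p) powr (1 / p)"
| "bdist Spm x y = (SUP n. fD (x n 0) (y n 0))"
| "bdist Spc x y = (SUP n. fD (x n 0) (y n 0))"
| "bdist Spc0 x y = (SUP n. fD (x n 0) (y n 0))"

text \<open>A finite Cartesian product of base spaces (a single space is a product of length 1),
  with the max metric.  Elements: component index \<Rightarrow> felem, fzero beyond the last component.\<close>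
type_synonym pelem = "nat \<Rightarrow> felem"

definition pcarrier :: "fspace list \<Rightarrow> pelem set" where
  "pcarrier Ss = {x. (\<forall>i<length Ss. x i \<in> bcarrier (Ss ! i)) \<and>
                     (\<forall>i\<ge>length Ss. x i = (\<lambda>n t. fzero))}"

definition pdist :: "fspace list \<Rightarrow> pelem \<Rightarrow> pelem \<Rightarrow> real" where
  "pdist Ss x y = Max {bdist (Ss ! i) (x i) (y i) | i. i < length Ss}"

definition padd :: "pelem \<Rightarrow> pelem \<Rightarrow> pelem" where
  "padd x y = (\<lambda>i n t. fadd (x i n t) (y i n t))"

definition pscale :: "real \<Rightarrow> pelem \<Rightarrow> pelem" where
  "pscale c x = (\<lambda>i n t. fscale c (x i n t))"

definition pzero :: pelem where
  "pzero = (\<lambda>i n t. fzero)"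

definition pnorm :: "fspace list \<Rightarrow> pelem \<Rightarrow> real" where
  "pnorm Ss x = pdist Ss pzero x"

definition lin_functional :: "fspace list \<Rightarrow> (pelem \<Rightarrow> real) \<Rightarrow> bool" where
  "lin_functional Ss A \<longleftrightarrow>
     (\<forall>x\<in>pcarrier Ss. \<forall>y\<in>pcarrier Ss. A (padd x y) = A x + A y) \<and>
     (\<forall>x\<in>pcarrier Ss. \<forall>c::real. A (pscale c x) = c * A x)"

definition lin_operator :: "fspace list \<Rightarrow> (pelem \<Rightarrow> pelem) \<Rightarrow> bool" where
  "lin_operator Ss A \<longleftrightarrow>
     (\<forall>x\<in>pcarrier Ss. A x \<in> pcarrier Ss) \<and>
     (\<forall>x\<in>pcarrier Ss. \<forall>y\<in>pcarrier Ss. A (padd x y) = padd (A x) (A y)) \<and>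
     (\<forall>x\<in>pcarrier Ss. \<forall>c::real. A (pscale c x) = pscale c (A x))"

definition cont_at_zero_functional :: "fspace list \<Rightarrow> (pelem \<Rightarrow> real) \<Rightarrow> bool" where
  "cont_at_zero_functional Ss A \<longleftrightarrow>
     (\<forall>e>0. \<exists>\<delta>>0. \<forall>x\<in>pcarrier Ss. pdist Ss pzero x < \<delta> \<longrightarrow> \<bar>A x - A pzero\<bar> < e)"

definition cont_at_zero_operator :: "fspace list \<Rightarrow> (pelem \<Rightarrow> pelem) \<Rightarrow> bool" where
  "cont_at_zero_operator Ss A \<longleftrightarrow>
     (\<forall>e>0. \<exists>\<delta>>0. \<forall>x\<in>pcarrier Ss. pdist Ss pzero x < \<delta> \<longrightarrow> pdist Ss (A pzero) (A x) < e)"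

definition opnorm_functional :: "fspace list \<Rightarrow> (pelem \<Rightarrow> real) \<Rightarrow> real" where
  "opnorm_functional Ss A =
     Inf {M. M > 0 \<and> (\<forall>x\<in>pcarrier Ss. \<bar>A x\<bar> \<le> M * pnorm Ss x)}"

definition opnorm_operator :: "fspace list \<Rightarrow> (pelem \<Rightarrow> pelem) \<Rightarrow> real" where
  "opnorm_operator Ss A =
     Inf {M. M > 0 \<and> (\<forall>x\<in>pcarrier Ss. pnorm Ss (A x) \<le> M * pnorm Ss x)}"

end

theory Submission
  imports Defs
begin

text \<open>Every admissible space is a cone under positive scalar multiplication on which the norm
  \<open>\<parallel>x\<parallel> = d(0, x)\<close> is positively homogeneous.  For a single fuzzy number this is the level-set
  identity \<open>[c u]\<^sup>r = c [u]\<^sup>r\<close>; it passes to the sup-, \<open>L\<^sup>p\<close>- and \<open>l\<^sup>p\<close>-metrics directly, to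
  \<open>C\<^sup>p\<close> because Hukuhara derivatives commute with positive scaling (which needs their uniqueness,
  i.e. cancellation in Zadeh addition), and to finite products with the max metric.
  A linear map continuous at \<open>0\<close> turns \<open>\<bar>A x\<bar>\<close> (resp. \<open>\<parallel>A x\<parallel>\<close>) into a positively homogeneous
  function that is below \<open>1\<close> on a ball around \<open>0\<close>, hence bounded by a multiple of \<open>\<parallel>x\<parallel>\<close>.  For
  any such pair of homogeneous functions, rescaling \<open>x\<close> to norm \<open>1\<close> shows that the least
  admissible constant is the supremum over the unit ball.\<close>

lemma cSup_cmult_image:
  fixes c :: real
  assumes "c > 0" "K \<noteq> {}" "bdd_above K"
  shows "Sup ((*) c ` K) = c * Sup K"
proof -
  have "continuous (at_left (Sup K)) ((*) c)" by (intro continuous_intros)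
  moreover have "mono ((*) c)" using assms(1) by (auto simp: mono_def)
  ultimately show ?thesis using continuous_at_Sup_mono[of "(*) c" K] assms(2,3) by simp
qed

lemma cInf_cmult_image:
  fixes c :: real
  assumes "c > 0" "K \<noteq> {}" "bdd_below K"
  shows "Inf ((*) c ` K) = c * Inf K"
proof -
  have "continuous (at_right (Inf K)) ((*) c)" by (intro continuous_intros)
  moreover have "mono ((*) c)" using assms(1) by (auto simp: mono_def)
  ultimately show ?thesis using continuous_at_Inf_mono[of "(*) c" K] assms(2,3) by simp
qed

lemma cSUP_cmult:
  fixes c :: real
  assumes "c > 0" "A \<noteq> {}" "bdd_above (g ` A)"
  shows "(SUP t\<in>A. c * g t) = c * (SUP t\<in>A. g t)"
  using cSup_cmult_image[of c "g ` A"] assms by (simp add: image_image)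

lemma cSUP_nonneg:
  fixes g :: "'a \<Rightarrow> real"
  assumes "A \<noteq> {}" "bdd_above (g ` A)" "\<And>t. t \<in> A \<Longrightarrow> 0 \<le> g t"
  shows "0 \<le> (SUP t\<in>A. g t)"
proof -
  obtain t where "t \<in> A" using assms(1) by blast
  then show ?thesis using cSUP_upper[OF _ assms(2)] assms(3) by (meson order.trans)
qed

lemma Minkowski_sum_atLeastAtMost:
  fixes a b c d :: real
  assumes "a \<le> b" "c \<le> d"
  shows "(\<Union>y\<in>{a..b}. \<Union>z\<in>{c..d}. {y + z}) = {a + c..b + d}"
proof
  show "{a + c..b + d} \<subseteq> (\<Union>y\<in>{a..b}. \<Union>z\<in>{c..d}. {y + z})"
  proof
    fix x assume x: "x \<in> {a + c..b + d}"
    let ?y = "max a (x - d)"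
    have "?y \<in> {a..b}" "x - ?y \<in> {c..d}" using x assms by auto
    then show "x \<in> (\<Union>y\<in>{a..b}. \<Union>z\<in>{c..d}. {y + z})" by force
  qed
qed auto

lemma powr_cmult_root:
  assumes "(c::real) > 0" "p \<noteq> 0" "0 \<le> E"
  shows "(c powr p * E) powr (1 / p) = c * E powr (1 / p)"
  using assms by (simp add: powr_mult powr_powr)

(* Unlike nn_integral_cmult, no measurability is assumed: the integrands below,
   built from the metric D, are not known to be measurable. *)
lemma nn_integral_cmult_ge:
  assumes a: "(a::real) > 0"
  shows "ennreal a * integral\<^sup>N M f \<le> (\<integral>\<^sup>+ x. ennreal a * f x \<partial>M)"
proof -
  have "ennreal a * integral\<^sup>N M f = (SUP g\<in>{g. simple_function M g \<and> g \<le> f}. ennreal a * integral\<^sup>S M g)"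
    unfolding nn_integral_def by (rule SUP_mult_left_ennreal)
  also have "\<dots> \<le> (\<integral>\<^sup>+ x. ennreal a * f x \<partial>M)"
  proof (rule SUP_least)
    fix g assume "g \<in> {g. simple_function M g \<and> g \<le> f}"
    then have g: "simple_function M g" "g \<le> f" by auto
    have "ennreal a * integral\<^sup>S M g = integral\<^sup>S M (\<lambda>x. ennreal a * g x)"
      using simple_integral_mult[OF g(1)] by simp
    also have "\<dots> = (\<integral>\<^sup>+ x. ennreal a * g x \<partial>M)"
      by (rule nn_integral_eq_simple_integral[symmetric]) (use g(1) in simp)
    also have "\<dots> \<le> (\<integral>\<^sup>+ x. ennreal a * f x \<partial>M)"
      using g(2) by (intro nn_integral_mono) (auto simp: le_fun_def intro: mult_left_mono)
    finally show "ennreal a * integral\<^sup>S M g \<le> (\<integral>\<^sup>+ x. ennreal a * f x \<partial>M)" .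
  qed
  finally show ?thesis .
qed

lemma nn_integral_cmult_pos:
  assumes a: "(a::real) > 0"
  shows "(\<integral>\<^sup>+ x. ennreal a * f x \<partial>M) = ennreal a * integral\<^sup>N M f"
proof (rule antisym)
  have one: "ennreal a * ennreal (1 / a) = 1" using a by (simp add: ennreal_mult[symmetric])
  have "ennreal (1 / a) * (\<integral>\<^sup>+ x. ennreal a * f x \<partial>M) \<le> integral\<^sup>N M f"
    using nn_integral_cmult_ge[of "1 / a" M "\<lambda>x. ennreal a * f x"] a
    by (simp add: mult.assoc[symmetric] mult.commute[of "ennreal (1 / a)"] one)
  then have "ennreal a * (ennreal (1 / a) * (\<integral>\<^sup>+ x. ennreal a * f x \<partial>M)) \<le> ennreal a * integral\<^sup>N M f"
    by (rule mult_left_mono) simp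
  then show "(\<integral>\<^sup>+ x. ennreal a * f x \<partial>M) \<le> ennreal a * integral\<^sup>N M f"
    by (simp add: mult.assoc[symmetric] one)
qed (rule nn_integral_cmult_ge[OF a])

section \<open>Positively homogeneous functions on a cone\<close>

locale homogeneous_pair =
  fixes N :: "'a set" and sc :: "real \<Rightarrow> 'a \<Rightarrow> 'a" and nm phi :: "'a \<Rightarrow> real"
  assumes nonempty: "N \<noteq> {}"
    and sc_closed: "\<And>x c. x \<in> N \<Longrightarrow> c > 0 \<Longrightarrow> sc c x \<in> N"
    and nm_sc: "\<And>x c. x \<in> N \<Longrightarrow> c > 0 \<Longrightarrow> nm (sc c x) = c * nm x"
    and phi_sc: "\<And>x c. x \<in> N \<Longrightarrow> c > 0 \<Longrightarrow> phi (sc c x) = c * phi x"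
    and nm_nonneg: "\<And>x. x \<in> N \<Longrightarrow> 0 \<le> nm x"
    and phi_nonneg: "\<And>x. x \<in> N \<Longrightarrow> 0 \<le> phi x"
begin

abbreviation bounds :: "real set" where
  "bounds \<equiv> {M. M > 0 \<and> (\<forall>x\<in>N. phi x \<le> M * nm x)}"

lemma bound_if_small_near_zero:
  assumes \<delta>: "\<delta> > 0" and small: "\<And>x. x \<in> N \<Longrightarrow> nm x < \<delta> \<Longrightarrow> phi x < 1"
  shows "2 / \<delta> \<in> bounds"
proof -
  have scaled: "c * phi x < 1" if "x \<in> N" "c > 0" "c * nm x < \<delta>" for x c
    using small[OF sc_closed[OF that(1,2)]] that by (simp add: nm_sc phi_sc)
  have "phi x \<le> 2 / \<delta> * nm x" if x: "x \<in> N" for x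
  proof (cases "nm x = 0")
    case True
    have "phi x \<le> 0"
    proof (rule ccontr)
      assume "\<not> phi x \<le> 0"
      then show False using scaled[OF x, of "1 / phi x"] True \<delta> by simp
    qed
    then show ?thesis using True by simp
  next
    case False
    then have n: "nm x > 0" using nm_nonneg[OF x] by simp
    have "\<delta> / (2 * nm x) * phi x < 1"
      using scaled[OF x, of "\<delta> / (2 * nm x)"] n \<delta> by simp
    then show ?thesis using n \<delta> by (simp add: field_simps)
  qed
  then show ?thesis using \<delta> by simp
qed

lemma le_Inf_bounds:
  assumes "bounds \<noteq> {}" and x: "x \<in> N"
  shows "phi x \<le> Inf bounds * nm x"
proof (cases "nm x = 0")
  case True
  obtain M where "M \<in> bounds" using assms(1) by blast
  then show ?thesis using x True by auto
next
  case False
  then have n: "nm x > 0" using nm_nonneg[OF x] by simp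
  have "phi x / nm x \<le> Inf bounds"
  proof (rule cInf_greatest[OF assms(1)])
    fix M assume "M \<in> bounds"
    then show "phi x / nm x \<le> M" using x n by (simp add: divide_le_eq)
  qed
  then show ?thesis using n by (simp add: divide_le_eq)
qed

lemma Inf_bounds_eq_Sup_unit_ball:
  assumes ne: "bounds \<noteq> {}"
  shows "Inf bounds = Sup {phi x | x. x \<in> N \<and> nm x \<le> 1}" (is "_ = Sup ?S")
proof (rule antisym)
  obtain x0 where x0: "x0 \<in> N" using nonempty by blast
  define y0 where "y0 = sc (1 / (nm x0 + 1)) x0"
  have "y0 \<in> N" "nm y0 \<le> 1"
    using sc_closed[OF x0] nm_sc[OF x0] nm_nonneg[OF x0] unfolding y0_def by auto
  then have y0: "phi y0 \<in> ?S" by blast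
  have Inf_nonneg: "0 \<le> Inf bounds" by (rule cInf_greatest[OF ne]) auto
  have S_le: "s \<le> Inf bounds" if "s \<in> ?S" for s
  proof -
    obtain x where x: "x \<in> N" "nm x \<le> 1" "s = phi x" using \<open>s \<in> ?S\<close> by blast
    have "phi x \<le> Inf bounds * nm x" by (rule le_Inf_bounds[OF ne x(1)])
    also have "\<dots> \<le> Inf bounds" using x(2) Inf_nonneg by (simp add: mult_left_le)
    finally show ?thesis using x(3) by simp
  qed
  then show "Sup ?S \<le> Inf bounds" using y0 by (intro cSup_least) auto
  have bdd: "bdd_above ?S" using S_le by (intro bdd_aboveI) blast
  have Sup_nonneg: "0 \<le> Sup ?S"
    using cSup_upper[OF y0 bdd] phi_nonneg[OF \<open>y0 \<in> N\<close>] by linarith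
  show "Inf bounds \<le> Sup ?S"
  proof (rule field_le_epsilon)
    fix e :: real assume e: "e > 0"
    have "phi x \<le> (Sup ?S + e) * nm x" if x: "x \<in> N" for x
    proof (cases "nm x = 0")
      case True
      then show ?thesis using le_Inf_bounds[OF ne x] by simp
    next
      case False
      then have n: "nm x > 0" using nm_nonneg[OF x] by simp
      have "sc (1 / nm x) x \<in> N" "nm (sc (1 / nm x) x) = 1"
        using sc_closed[OF x] nm_sc[OF x] n by auto
      then have "phi x / nm x \<in> ?S" using phi_sc[OF x, of "1 / nm x"] n by force
      then have "phi x / nm x \<le> Sup ?S + e" using cSup_upper[OF _ bdd] e by force
      then show ?thesis using n by (simp add: divide_le_eq)
    qed
    then have "Sup ?S + e \<in> bounds" using Sup_nonneg e by simp
    then show "Inf bounds \<le> Sup ?S + e" by (rule cInf_lower) (rule bdd_belowI[of _ 0], simp)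
  qed
qed

end

section \<open>Membership functions and cuts\<close>

lemma fmem_is_fuzzy_number: "is_fuzzy_number (fmem u)"
  using fmem by auto

lemma fmem_nonneg: "0 \<le> fmem u x"
  and fmem_le_one: "fmem u x \<le> 1"
  and fmem_normal: "\<exists>x. fmem u x = 1"
  and fmem_fuzzy_convex: "fuzzy_convex (fmem u)"
  and fmem_usc: "usc_fun (fmem u)"
  and compact_support_closure: "compact (closure {x. fmem u x > 0})"
  using fmem_is_fuzzy_number[of u] unfolding is_fuzzy_number_def by auto

lemma bounded_support: "bounded {x. fmem u x > 0}"
  using compact_support_closure[of u] compact_closure by blast

lemma support_closure_nonempty: "closure {x. fmem u x > 0} \<noteq> {}"
  using fmem_normal[of u] closure_subset by (metis (mono_tags) empty_iff mem_Collect_eq subsetD zero_less_one)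

lemma usc_fun_limit_le:
  assumes g: "usc_fun g" and X: "X \<longlonglongrightarrow> y" and a: "a \<longlonglongrightarrow> s" and le: "\<And>n. a n \<le> g (X n)"
  shows "s \<le> g y"
proof (rule ccontr)
  assume "\<not> s \<le> g y"
  define e where "e = (s - g y) / 2"
  have e: "e > 0" using \<open>\<not> s \<le> g y\<close> by (simp add: e_def)
  obtain d where d: "d > 0" "\<And>z. \<bar>z - y\<bar> < d \<Longrightarrow> g z < g y + e"
    using g e unfolding usc_fun_def by blast
  have "eventually (\<lambda>n. dist (X n) y < d \<and> dist (a n) s < e) sequentially"
    using eventually_conj[OF tendstoD[OF X d(1)] tendstoD[OF a e]] .
  then obtain n where "dist (X n) y < d" "dist (a n) s < e"
    using eventually_happens' sequentially_bot by blast
  then have "g (X n) < g y + e" "a n > s - e" using d(2) by (auto simp: dist_real_def)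
  moreover have "g y + e = s - e" unfolding e_def by (simp add: field_simps)
  ultimately show False using le[of n] by linarith
qed

lemma usc_fun_if_closed_superlevel:
  assumes "\<And>s. closed {x. s \<le> f x}"
  shows "usc_fun f"
  unfolding usc_fun_def
proof (intro allI impI)
  fix x e :: real assume "e > 0"
  have "open (- {y. f x + e \<le> f y})" "x \<in> - {y. f x + e \<le> f y}"
    using assms \<open>e > 0\<close> by auto
  then obtain d where "d > 0" "\<And>y. dist y x < d \<Longrightarrow> y \<in> - {y. f x + e \<le> f y}"
    unfolding open_dist by blast
  then show "\<exists>d>0. \<forall>y. \<bar>y - x\<bar> < d \<longrightarrow> f y < f x + e"
    by (auto simp: dist_real_def not_le)
qed

definition fcut :: "fuzzy \<Rightarrow> real \<Rightarrow> real set" where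
  "fcut u r = {x. r \<le> fmem u x}"

lemma level_eq_fcut: "0 < r \<Longrightarrow> level u r = fcut u r"
  unfolding level_def fcut_def by auto

lemma fcut_nonempty: "r \<le> 1 \<Longrightarrow> fcut u r \<noteq> {}"
  using fmem_normal[of u] unfolding fcut_def by (metis (mono_tags) empty_Collect_eq)

lemma fcut_subset_support_closure: "0 < r \<Longrightarrow> fcut u r \<subseteq> closure {x. fmem u x > 0}"
  unfolding fcut_def using closure_subset by fastforce

lemma bounded_fcut: "0 < r \<Longrightarrow> bounded (fcut u r)"
  using fcut_subset_support_closure bounded_subset compact_support_closure compact_imp_bounded
  by metis

lemma closed_fcut: "closed (fcut u r)"
  unfolding closed_sequential_limits fcut_def
  using usc_fun_limit_le[OF fmem_usc _ tendsto_const] by auto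

lemma compact_fcut: "0 < r \<Longrightarrow> compact (fcut u r)"
  using bounded_fcut closed_fcut compact_eq_bounded_closed by blast

lemma fcut_convex:
  assumes a: "a \<in> fcut u r" and b: "b \<in> fcut u r" and x: "a \<le> x" "x \<le> b"
  shows "x \<in> fcut u r"
proof (cases "a = b")
  case True then show ?thesis using a x by auto
next
  case False
  define t where "t = (b - x) / (b - a)"
  have t: "0 \<le> t" "t \<le> 1" using False x by (auto simp: t_def divide_simps)
  have "t * (b - a) = b - x" using False by (simp add: t_def)
  then have "t * a + (1 - t) * b = x" by (simp add: algebra_simps)
  then have "min (fmem u a) (fmem u b) \<le> fmem u x"
    using fmem_fuzzy_convex[of u] t unfolding fuzzy_convex_def by metis
  then show ?thesis using a b unfolding fcut_def by auto
qed

lemma fcut_interval: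
  assumes r: "0 < r" "r \<le> 1"
  shows "fcut u r = {Inf (fcut u r) .. Sup (fcut u r)}"
    and "Inf (fcut u r) \<in> fcut u r" "Sup (fcut u r) \<in> fcut u r"
proof -
  have ne: "fcut u r \<noteq> {}" using fcut_nonempty r by auto
  have bb: "bdd_below (fcut u r)" "bdd_above (fcut u r)"
    using bounded_fcut[OF r(1)] by (auto simp: bounded_imp_bdd_below bounded_imp_bdd_above)
  show i: "Inf (fcut u r) \<in> fcut u r" using closed_contains_Inf[OF ne bb(1) closed_fcut] .
  show s: "Sup (fcut u r) \<in> fcut u r" using closed_contains_Sup[OF ne bb(2) closed_fcut] .
  show "fcut u r = {Inf (fcut u r) .. Sup (fcut u r)}"
    using bb fcut_convex[OF i s] by (auto intro: cInf_lower cSup_upper)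
qed

lemma lower_upper_mono:
  assumes r: "0 \<le> r" "r \<le> 1"
  shows "lower u 0 \<le> lower u r" "lower u r \<le> upper u r" "upper u r \<le> upper u 0"
proof -
  let ?C = "closure {x. fmem u x > 0}"
  have bC: "bdd_below ?C" "bdd_above ?C"
    using compact_imp_bounded[OF compact_support_closure[of u]]
    by (auto simp: bounded_imp_bdd_below bounded_imp_bdd_above)
  have l0: "lower u 0 = Inf ?C" "upper u 0 = Sup ?C"
    unfolding lower_def upper_def level_def by auto
  have "lower u 0 \<le> lower u r \<and> lower u r \<le> upper u r \<and> upper u r \<le> upper u 0"
  proof (cases "r = 0")
    case True
    then show ?thesis using l0 cInf_le_cSup[OF support_closure_nonempty bC(2) bC(1)] by simp
  next
    case False
    then have r0: "0 < r" using r by auto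
    have ne: "fcut u r \<noteq> {}" using fcut_nonempty r by auto
    have sub: "fcut u r \<subseteq> ?C" using fcut_subset_support_closure[OF r0] .
    have "lower u r = Inf (fcut u r)" "upper u r = Sup (fcut u r)"
      using level_eq_fcut[OF r0] unfolding lower_def upper_def by auto
    moreover have "Inf (fcut u r) \<le> Sup (fcut u r)"
      using fcut_interval(1,2)[OF r0 r(2), of u] by (metis atLeastAtMost_iff)
    ultimately show ?thesis unfolding l0
      using cInf_superset_mono[OF ne bC(1) sub] cSup_subset_mono[OF ne bC(2) sub] by auto
  qed
  then show "lower u 0 \<le> lower u r" "lower u r \<le> upper u r" "upper u r \<le> upper u 0"
    by auto
qed

lemma fuzzy_eqI:
  assumes "\<And>r. 0 < r \<Longrightarrow> r \<le> 1 \<Longrightarrow> lower u r = lower v r \<and> upper u r = upper v r"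
  shows "u = v"
proof -
  have fcut_eq: "fcut u r = fcut v r" if "0 < r" "r \<le> 1" for r
    using fcut_interval(1)[OF that, of u] fcut_interval(1)[OF that, of v] assms[OF that]
      level_eq_fcut[OF that(1)] unfolding lower_def upper_def by metis
  have "fmem u x = fmem v x" for x
  proof (cases "max (fmem u x) (fmem v x) = 0")
    case True
    then show ?thesis using fmem_nonneg[of u x] fmem_nonneg[of v x] by linarith
  next
    case False
    let ?r = "max (fmem u x) (fmem v x)"
    have r: "0 < ?r" "?r \<le> 1" using False fmem_nonneg[of u x] fmem_le_one[of u x] fmem_le_one[of v x]
      by (auto simp: max_def)
    have "x \<in> fcut u ?r \<longleftrightarrow> x \<in> fcut v ?r" using fcut_eq[OF r] by simp
    then show ?thesis unfolding fcut_def by (auto simp: max_def split: if_splits)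
  qed
  then show ?thesis using fmem_inject by blast
qed

section \<open>The metric \<open>D\<close>\<close>

definition level_dist :: "fuzzy \<Rightarrow> fuzzy \<Rightarrow> real \<Rightarrow> real" where
  "level_dist u v r = max \<bar>lower u r - lower v r\<bar> \<bar>upper u r - upper v r\<bar>"

lemma fD_eq_SUP_level_dist: "fD u v = (SUP r\<in>{0..1}. level_dist u v r)"
  unfolding fD_def level_dist_def ..

lemma abs_lower_upper_le:
  assumes "r \<in> {0..1}"
  shows "\<bar>lower u r\<bar> \<le> \<bar>lower u 0\<bar> + \<bar>upper u 0\<bar>" "\<bar>upper u r\<bar> \<le> \<bar>lower u 0\<bar> + \<bar>upper u 0\<bar>"
  using lower_upper_mono[of r u] assms by auto

lemma bdd_above_level_dist: "bdd_above (level_dist u v ` {0..1})"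
proof (rule bdd_aboveI2)
  fix r :: real assume "r \<in> {0..1}"
  then show "level_dist u v r \<le> (\<bar>lower u 0\<bar> + \<bar>upper u 0\<bar>) + (\<bar>lower v 0\<bar> + \<bar>upper v 0\<bar>)"
    using abs_lower_upper_le[of r u] abs_lower_upper_le[of r v] unfolding level_dist_def
    by (auto intro: order.trans[OF abs_triangle_ineq4] add_mono)
qed

lemma level_dist_le_fD: "r \<in> {0..1} \<Longrightarrow> level_dist u v r \<le> fD u v"
  unfolding fD_eq_SUP_level_dist using bdd_above_level_dist by (rule cSUP_upper[rotated])

lemma fD_leI: "(\<And>r. r \<in> {0..1} \<Longrightarrow> level_dist u v r \<le> M) \<Longrightarrow> fD u v \<le> M"
  unfolding fD_eq_SUP_level_dist by (rule cSUP_least) auto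

lemma fD_nonneg: "0 \<le> fD u v"
  using level_dist_le_fD[of 0 u v] unfolding level_dist_def by auto

lemma fD_self: "fD u u = 0"
  using fD_leI[of u u 0] fD_nonneg[of u u] unfolding level_dist_def by auto

lemma fD_commute: "fD u v = fD v u"
  unfolding fD_def by (simp add: abs_minus_commute)

lemma fD_triangle: "fD u w \<le> fD u v + fD v w"
proof (rule fD_leI)
  fix r :: real assume r: "r \<in> {0..1}"
  have "level_dist u w r \<le> level_dist u v r + level_dist v w r"
    unfolding level_dist_def by auto
  also have "\<dots> \<le> fD u v + fD v w" using level_dist_le_fD[OF r] add_mono by blast
  finally show "level_dist u w r \<le> fD u v + fD v w" .
qed

lemma fD_eq_0_imp_eq: "fD u v = 0 \<Longrightarrow> u = v"
proof (rule fuzzy_eqI)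
  fix r :: real assume "fD u v = 0" "0 < r" "r \<le> 1"
  then have "level_dist u v r \<le> 0" using level_dist_le_fD[of r u v] by auto
  then show "lower u r = lower v r \<and> upper u r = upper v r" unfolding level_dist_def by auto
qed

lemma abs_fD_fzero_diff_le: "\<bar>fD fzero u - fD fzero v\<bar> \<le> fD u v"
  using fD_triangle[of fzero u v] fD_triangle[of fzero v u] fD_commute[of u v] by linarith

section \<open>Scalar multiplication\<close>

lemma fmem_fzero: "fmem fzero = (\<lambda>x. if x = 0 then 1 else 0)"
  unfolding fzero_def using Abs_fuzzy_inverse fuzzy_number_ex by auto

lemma is_fuzzy_number_rescale:
  assumes c: "c > 0"
  shows "is_fuzzy_number (\<lambda>x. fmem u (x / c))"
proof -
  obtain x0 where "fmem u x0 = 1" using fmem_normal by blast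
  then have normal: "fmem u ((x0 * c) / c) = 1" using c by simp
  have convex: "fuzzy_convex (\<lambda>x. fmem u (x / c))"
    unfolding fuzzy_convex_def
  proof (intro allI impI)
    fix x y t :: real assume "0 \<le> t \<and> t \<le> 1"
    moreover have "(t * x + (1 - t) * y) / c = t * (x / c) + (1 - t) * (y / c)"
      using c by (simp add: field_simps)
    ultimately show "min (fmem u (x / c)) (fmem u (y / c)) \<le> fmem u ((t * x + (1 - t) * y) / c)"
      using fmem_fuzzy_convex[of u] unfolding fuzzy_convex_def by metis
  qed
  have "closed ((\<lambda>x. x / c) -` fcut u s)" for s
    using c by (intro continuous_closed_vimage closed_fcut continuous_intros) simp
  then have usc: "usc_fun (\<lambda>x. fmem u (x / c))"
    by (intro usc_fun_if_closed_superlevel) (simp add: fcut_def vimage_def)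
  obtain a where a: "\<forall>x\<in>{x. fmem u x > 0}. \<bar>x\<bar> \<le> a"
    using bounded_support[of u] unfolding bounded_real by blast
  have "\<forall>x\<in>{x. fmem u (x / c) > 0}. \<bar>x\<bar> \<le> c * a"
    using a c by (auto simp: abs_divide divide_le_eq mult.commute)
  then have "bounded {x. fmem u (x / c) > 0}" unfolding bounded_real by blast
  then show ?thesis unfolding is_fuzzy_number_def
    using fmem_nonneg fmem_le_one normal convex usc by (auto intro: exI[of _ "x0 * c"])
qed

lemma fmem_fscale: "c > 0 \<Longrightarrow> fmem (fscale c u) = (\<lambda>x. fmem u (x / c))"
  unfolding fscale_def using Abs_fuzzy_inverse is_fuzzy_number_rescale by auto

lemma fscale_fzero: "fscale c fzero = fzero"
proof (cases "c = 0")
  case False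
  then have "(\<lambda>x. fmem fzero (x / c)) = (\<lambda>x. if x = 0 then 1 else 0)"
    unfolding fmem_fzero by auto
  then show ?thesis using False unfolding fscale_def by (simp add: fzero_def)
qed (simp add: fscale_def)

lemma fscale_commute: "a > 0 \<Longrightarrow> b > 0 \<Longrightarrow> fscale a (fscale b u) = fscale b (fscale a u)"
proof -
  assume "a > 0" "b > 0"
  then have "fmem (fscale a (fscale b u)) = fmem (fscale b (fscale a u))"
    by (simp add: fmem_fscale mult.commute)
  then show ?thesis using fmem_inject by blast
qed

lemma level_nonempty_bounded:
  assumes "0 \<le> r" "r \<le> 1"
  shows "level u r \<noteq> {}" "bdd_below (level u r)" "bdd_above (level u r)"
proof -
  have "level u r \<noteq> {} \<and> bounded (level u r)"
  proof (cases "r = 0")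
    case True
    then show ?thesis unfolding level_def
      using support_closure_nonempty[of u] compact_imp_bounded[OF compact_support_closure[of u]] by simp
  next
    case False
    then have "0 < r" using assms by auto
    then show ?thesis using level_eq_fcut fcut_nonempty[OF assms(2)] bounded_fcut by metis
  qed
  then show "level u r \<noteq> {}" "bdd_below (level u r)" "bdd_above (level u r)"
    by (auto simp: bounded_imp_bdd_below bounded_imp_bdd_above)
qed

lemma level_fscale:
  assumes c: "c > 0"
  shows "level (fscale c u) r = (*) c ` level u r"
proof -
  have img: "{x. P (x / c)} = (*) c ` {y. P y}" for P :: "real \<Rightarrow> bool"
  proof
    show "{x. P (x / c)} \<subseteq> (*) c ` {y. P y}"
    proof
      fix x assume "x \<in> {x. P (x / c)}"
      then have "x = c * (x / c)" "x / c \<in> {y. P y}" using c by auto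
      then show "x \<in> (*) c ` {y. P y}" by (rule image_eqI)
    qed
  qed (use c in auto)
  have "closure ((*) c ` {y. 0 < fmem u y}) = (*) c ` closure {y. 0 < fmem u y}"
    using closure_scaleR[of c "{y. 0 < fmem u y}"] by (simp add: scaleR_conv_of_real)
  then show ?thesis unfolding level_def fmem_fscale[OF c]
    using img[of "\<lambda>y. 0 < fmem u y"] img[of "\<lambda>y. r \<le> fmem u y"] by simp
qed

lemma lower_fscale: "c > 0 \<Longrightarrow> r \<in> {0..1} \<Longrightarrow> lower (fscale c u) r = c * lower u r"
  unfolding lower_def by (simp add: level_fscale cInf_cmult_image level_nonempty_bounded)

lemma upper_fscale: "c > 0 \<Longrightarrow> r \<in> {0..1} \<Longrightarrow> upper (fscale c u) r = c * upper u r"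
  unfolding upper_def by (simp add: level_fscale cSup_cmult_image level_nonempty_bounded)

lemma level_dist_fscale:
  assumes "c > 0" "r \<in> {0..1}"
  shows "level_dist (fscale c u) (fscale c v) r = c * level_dist u v r"
proof -
  have "\<bar>c * a - c * b\<bar> = c * \<bar>a - b\<bar>" for a b :: real
    using assms(1) by (simp add: right_diff_distrib[symmetric] abs_mult)
  then show ?thesis unfolding level_dist_def using assms
    by (simp add: lower_fscale upper_fscale max_mult_distrib_left)
qed

lemma fD_fscale:
  assumes c: "c > 0"
  shows "fD (fscale c u) (fscale c v) = c * fD u v"
proof -
  have "(SUP r\<in>{0..1}. level_dist (fscale c u) (fscale c v) r) = (SUP r\<in>{0..1}. c * level_dist u v r)"
    using level_dist_fscale[OF c] by simp
  then show ?thesis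
    unfolding fD_eq_SUP_level_dist using cSUP_cmult[OF c _ bdd_above_level_dist] by simp
qed

lemma fD_fzero_fscale: "c > 0 \<Longrightarrow> fD fzero (fscale c u) = c * fD fzero u"
  using fD_fscale[of c fzero u] fscale_fzero by simp

section \<open>Zadeh addition\<close>

definition zadeh_sum :: "fuzzy \<Rightarrow> fuzzy \<Rightarrow> real \<Rightarrow> real" where
  "zadeh_sum u v x = (SUP y. min (fmem u y) (fmem v (x - y)))"

lemma bdd_above_zadeh_sum: "bdd_above (range (\<lambda>y. min (fmem u y) (fmem v (x - y))))"
  by (rule bdd_aboveI2[where M=1]) (simp add: fmem_le_one min.coboundedI1)

lemma min_le_zadeh_sum: "min (fmem u y) (fmem v (x - y)) \<le> zadeh_sum u v x"
  unfolding zadeh_sum_def by (rule cSUP_upper[OF UNIV_I bdd_above_zadeh_sum])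

lemma zadeh_sum_le_one: "zadeh_sum u v x \<le> 1"
  unfolding zadeh_sum_def by (rule cSUP_least) (auto simp: fmem_le_one min.coboundedI1)

lemma zadeh_sum_nonneg: "0 \<le> zadeh_sum u v x"
  using min_le_zadeh_sum[of u 0 v x] fmem_nonneg[of u 0] fmem_nonneg[of v x] by simp

text \<open>Near-maximisers lie in the compact closure of the support of \<open>u\<close>; a limit point of them
  is a maximiser by upper semicontinuity of both membership functions.\<close>

lemma zadeh_sum_attained: "\<exists>y. zadeh_sum u v x = min (fmem u y) (fmem v (x - y))"
proof (cases "zadeh_sum u v x = 0")
  case True
  then show ?thesis using min_le_zadeh_sum[of u 0 v x] fmem_nonneg[of u 0] fmem_nonneg[of v x]
    by (intro exI[of _ 0]) simp
next
  case False
  define s where "s = zadeh_sum u v x"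
  have s: "0 < s" using False zadeh_sum_nonneg[of u v x] unfolding s_def by simp
  define a where "a n = s - s / 2 * inverse (real (Suc n))" for n
  have a_lim: "a \<longlonglongrightarrow> s"
    unfolding a_def
    using tendsto_diff[OF tendsto_const tendsto_mult[OF tendsto_const LIMSEQ_inverse_real_of_nat],
        of s "s / 2"]
    by simp
  have a_bounds: "a n < s" "s / 2 \<le> a n" for n
    using s unfolding a_def by (auto simp: inverse_le_1_iff mult_le_cancel_left1)
  have "\<exists>y. a n < min (fmem u y) (fmem v (x - y))" for n
    using a_bounds(1)[of n] less_cSUP_iff[OF _ bdd_above_zadeh_sum] unfolding s_def zadeh_sum_def
    by blast
  then obtain Y where Y: "\<And>n. a n < min (fmem u (Y n)) (fmem v (x - Y n))" by metis
  have "Y n \<in> closure {x. fmem u x > 0}" for n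
    using Y[of n] a_bounds(2)[of n] s closure_subset by fastforce
  then obtain l r where lr: "strict_mono r" "(Y \<circ> r) \<longlonglongrightarrow> l"
    using seq_compactE[OF compact_imp_seq_compact[OF compact_support_closure]] by metis
  have ar: "(a \<circ> r) \<longlonglongrightarrow> s" using LIMSEQ_subseq_LIMSEQ[OF a_lim lr(1)] .
  have "s \<le> fmem u l"
    using usc_fun_limit_le[OF fmem_usc lr(2) ar] Y by (simp add: less_imp_le)
  moreover have "s \<le> fmem v (x - l)"
    using usc_fun_limit_le[OF fmem_usc tendsto_diff[OF tendsto_const lr(2)] ar] Y
    by (simp add: less_imp_le)
  moreover have "min (fmem u l) (fmem v (x - l)) \<le> s" using min_le_zadeh_sum unfolding s_def by blast
  ultimately show ?thesis unfolding s_def by (intro exI[of _ l]) linarith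
qed

lemma zadeh_sum_ge_iff:
  assumes "0 < s"
  shows "s \<le> zadeh_sum u v x \<longleftrightarrow> (\<exists>y. y \<in> fcut u s \<and> x - y \<in> fcut v s)"
proof
  assume s: "s \<le> zadeh_sum u v x"
  obtain y where "zadeh_sum u v x = min (fmem u y) (fmem v (x - y))"
    using zadeh_sum_attained by blast
  then have "y \<in> fcut u s" "x - y \<in> fcut v s" using s unfolding fcut_def by auto
  then show "\<exists>y. y \<in> fcut u s \<and> x - y \<in> fcut v s" by blast
next
  assume "\<exists>y. y \<in> fcut u s \<and> x - y \<in> fcut v s"
  then obtain y where "s \<le> fmem u y" "s \<le> fmem v (x - y)" unfolding fcut_def by blast
  then show "s \<le> zadeh_sum u v x" using min_le_zadeh_sum[of u y v x] by linarith
qed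

lemma superlevel_zadeh_sum:
  assumes "0 < s"
  shows "{x. s \<le> zadeh_sum u v x} = (\<Union>y\<in>fcut u s. \<Union>z\<in>fcut v s. {y + z})"
proof (intro set_eqI iffI)
  fix x assume "x \<in> {x. s \<le> zadeh_sum u v x}"
  then obtain y where "y \<in> fcut u s" "x - y \<in> fcut v s" using zadeh_sum_ge_iff[OF assms] by blast
  then show "x \<in> (\<Union>y\<in>fcut u s. \<Union>z\<in>fcut v s. {y + z})" by force
next
  fix x assume "x \<in> (\<Union>y\<in>fcut u s. \<Union>z\<in>fcut v s. {y + z})"
  then obtain y z where "y \<in> fcut u s" "z \<in> fcut v s" "x = y + z" by blast
  then show "x \<in> {x. s \<le> zadeh_sum u v x}" using zadeh_sum_ge_iff[OF assms, of u v x] by auto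
qed

lemma is_fuzzy_number_zadeh_sum: "is_fuzzy_number (zadeh_sum u v)"
proof -
  obtain a b where "fmem u a = 1" "fmem v b = 1" using fmem_normal by metis
  then have normal: "zadeh_sum u v (a + b) = 1"
    using min_le_zadeh_sum[of u a v "a + b"] zadeh_sum_le_one[of u v "a + b"] by simp
  have convex: "fuzzy_convex (zadeh_sum u v)"
    unfolding fuzzy_convex_def
  proof (intro allI impI)
    fix x1 x2 t :: real assume t: "0 \<le> t \<and> t \<le> 1"
    obtain y1 y2 where y1: "zadeh_sum u v x1 = min (fmem u y1) (fmem v (x1 - y1))"
      and y2: "zadeh_sum u v x2 = min (fmem u y2) (fmem v (x2 - y2))"
      using zadeh_sum_attained by metis
    have eq: "t * (x1 - y1) + (1 - t) * (x2 - y2) = (t * x1 + (1 - t) * x2) - (t * y1 + (1 - t) * y2)"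
      by (simp add: algebra_simps)
    have "min (fmem u y1) (fmem u y2) \<le> fmem u (t * y1 + (1 - t) * y2)"
      and "min (fmem v (x1 - y1)) (fmem v (x2 - y2)) \<le> fmem v (t * (x1 - y1) + (1 - t) * (x2 - y2))"
      using fmem_fuzzy_convex t unfolding fuzzy_convex_def by blast+
    moreover have "min (fmem u (t * y1 + (1 - t) * y2))
        (fmem v ((t * x1 + (1 - t) * x2) - (t * y1 + (1 - t) * y2))) \<le> zadeh_sum u v (t * x1 + (1 - t) * x2)"
      by (rule min_le_zadeh_sum)
    ultimately show "min (zadeh_sum u v x1) (zadeh_sum u v x2) \<le> zadeh_sum u v (t * x1 + (1 - t) * x2)"
      unfolding y1 y2 eq by linarith
  qed
  have "closed {x. s \<le> zadeh_sum u v x}" for s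
  proof (cases "0 < s")
    case True
    then show ?thesis unfolding superlevel_zadeh_sum[OF True]
      by (intro compact_imp_closed compact_sums' compact_fcut)
  next
    case False
    then have "{x. s \<le> zadeh_sum u v x} = UNIV"
      using zadeh_sum_nonneg[of u v] by (auto intro: order.trans[of s 0])
    then show ?thesis by simp
  qed
  then have usc: "usc_fun (zadeh_sum u v)" by (rule usc_fun_if_closed_superlevel)
  let ?C = "\<lambda>w. closure {x. fmem w x > 0}"
  have "{x. zadeh_sum u v x > 0} \<subseteq> (\<Union>y\<in>?C u. \<Union>z\<in>?C v. {y + z})"
  proof
    fix x assume "x \<in> {x. zadeh_sum u v x > 0}"
    moreover obtain y where "zadeh_sum u v x = min (fmem u y) (fmem v (x - y))"
      using zadeh_sum_attained by blast
    ultimately have "y \<in> ?C u" "x - y \<in> ?C v" using closure_subset by fastforce+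
    then show "x \<in> (\<Union>y\<in>?C u. \<Union>z\<in>?C v. {y + z})" by force
  qed
  moreover have "compact (\<Union>y\<in>?C u. \<Union>z\<in>?C v. {y + z})"
    by (intro compact_sums' compact_support_closure)
  ultimately have "bounded {x. zadeh_sum u v x > 0}"
    using bounded_subset compact_imp_bounded by blast
  then show ?thesis unfolding is_fuzzy_number_def
    using zadeh_sum_nonneg zadeh_sum_le_one normal convex usc by auto
qed

lemma fmem_fadd: "fmem (fadd u v) = zadeh_sum u v"
  using Abs_fuzzy_inverse is_fuzzy_number_zadeh_sum unfolding fadd_def zadeh_sum_def by auto

lemma fcut_fadd: "0 < r \<Longrightarrow> fcut (fadd u v) r = (\<Union>y\<in>fcut u r. \<Union>z\<in>fcut v r. {y + z})"
  unfolding fcut_def fmem_fadd by (rule superlevel_zadeh_sum[unfolded fcut_def])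

lemma lower_upper_fadd:
  assumes r: "0 < r" "r \<le> 1"
  shows "lower (fadd u v) r = lower u r + lower v r \<and> upper (fadd u v) r = upper u r + upper v r"
proof -
  have cut: "fcut w r = {lower w r..upper w r}" "lower w r \<le> upper w r" for w
    using fcut_interval[OF r, of w] level_eq_fcut[OF r(1)] unfolding lower_def upper_def
    by (metis atLeastAtMost_iff)+
  have "fcut (fadd u v) r = {lower u r + lower v r..upper u r + upper v r}"
    unfolding fcut_fadd[OF r(1)] cut(1)[of u] cut(1)[of v]
    by (rule Minkowski_sum_atLeastAtMost[OF cut(2) cut(2)])
  then show ?thesis using cut(1)[of "fadd u v"] cut(2)[of u] cut(2)[of v]
    by (simp add: Icc_eq_Icc)
qed

lemma fadd_left_cancel: "fadd u w1 = fadd u w2 \<Longrightarrow> w1 = w2"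
  by (rule fuzzy_eqI) (metis add_left_cancel lower_upper_fadd)

lemma lower_upper_fzero: "0 < r \<Longrightarrow> r \<le> 1 \<Longrightarrow> lower fzero r = 0 \<and> upper fzero r = 0"
proof -
  assume "0 < r" "r \<le> 1"
  then have "level fzero r = {0}" unfolding level_def fmem_fzero by auto
  then show ?thesis unfolding lower_def upper_def by simp
qed

lemma fadd_fzero: "fadd u fzero = u"
  by (rule fuzzy_eqI) (simp add: lower_upper_fadd lower_upper_fzero)

lemma fscale_fadd: "c > 0 \<Longrightarrow> fscale c (fadd u v) = fadd (fscale c u) (fscale c v)"
  by (rule fuzzy_eqI) (simp add: lower_upper_fadd lower_fscale upper_fscale distrib_left)

section \<open>Hukuhara derivatives\<close>

lemma has_fhderivD:
  assumes "has_fhderiv_at S f g t" "e > 0"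
  obtains d where "d > 0"
    "\<And>h. 0 < h \<Longrightarrow> h < d \<Longrightarrow> t + h \<in> S \<Longrightarrow>
      \<exists>w. f (t + h) = fadd (f t) w \<and> fD (fscale (1 / h) w) g < e"
    "\<And>h. 0 < h \<Longrightarrow> h < d \<Longrightarrow> t - h \<in> S \<Longrightarrow>
      \<exists>w. f t = fadd (f (t - h)) w \<and> fD (fscale (1 / h) w) g < e"
proof -
  obtain d where "d > 0" and d: "\<forall>h. 0 < h \<and> h < d \<longrightarrow>
      (t + h \<in> S \<longrightarrow> (\<exists>w. f (t + h) = fadd (f t) w \<and> fD (fscale (1 / h) w) g < e)) \<and>
      (t - h \<in> S \<longrightarrow> (\<exists>w. f t = fadd (f (t - h)) w \<and> fD (fscale (1 / h) w) g < e))"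
    using assms unfolding has_fhderiv_at_def by blast
  show ?thesis by (rule that[OF \<open>d > 0\<close>]) (use d in blast)+
qed

lemma has_fhderiv_at_cong:
  assumes "\<forall>s\<in>S. F s = G s" "t \<in> S"
  shows "has_fhderiv_at S F g t \<longleftrightarrow> has_fhderiv_at S G g t"
proof -
  have "(t + h \<in> S \<longrightarrow> (\<exists>w. F (t + h) = fadd (F t) w \<and> P w)) \<longleftrightarrow>
        (t + h \<in> S \<longrightarrow> (\<exists>w. G (t + h) = fadd (G t) w \<and> P w))"
       "(t - h \<in> S \<longrightarrow> (\<exists>w. F t = fadd (F (t - h)) w \<and> P w)) \<longleftrightarrow>
        (t - h \<in> S \<longrightarrow> (\<exists>w. G t = fadd (G (t - h)) w \<and> P w))" for h P
    using assms by auto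
  then show ?thesis unfolding has_fhderiv_at_def by simp
qed

lemma fhderiv_cong:
  assumes "\<forall>s\<in>S. F s = G s"
  shows "fhderiv S F = fhderiv S G"
  unfolding fhderiv_def by (intro ext) (simp add: has_fhderiv_at_cong[OF assms])

lemma funpow_fhderiv_cong_on:
  assumes "\<forall>s\<in>S. F s = G s"
  shows "\<forall>s\<in>S. (fhderiv S ^^ i) F s = (fhderiv S ^^ i) G s"
proof (induction i)
  case (Suc i)
  then show ?case using fhderiv_cong[OF Suc.IH] by simp
qed (use assms in simp)

lemma has_fhderiv_at_unique:
  assumes ab: "a < b" and t: "t \<in> {a..b}"
    and g1: "has_fhderiv_at {a..b} f g1 t" and g2: "has_fhderiv_at {a..b} f g2 t"
  shows "g1 = g2"
proof -
  have "fD g1 g2 \<le> 0 + e" if e: "e > 0" for e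
  proof -
    have e2: "e / 2 > 0" using e by simp
    obtain d1 where d1: "d1 > 0"
      "\<And>h. 0 < h \<Longrightarrow> h < d1 \<Longrightarrow> t + h \<in> {a..b} \<Longrightarrow>
        \<exists>w. f (t + h) = fadd (f t) w \<and> fD (fscale (1 / h) w) g1 < e / 2"
      "\<And>h. 0 < h \<Longrightarrow> h < d1 \<Longrightarrow> t - h \<in> {a..b} \<Longrightarrow>
        \<exists>w. f t = fadd (f (t - h)) w \<and> fD (fscale (1 / h) w) g1 < e / 2"
      using has_fhderivD[OF g1 e2] by blast
    obtain d2 where d2: "d2 > 0"
      "\<And>h. 0 < h \<Longrightarrow> h < d2 \<Longrightarrow> t + h \<in> {a..b} \<Longrightarrow>
        \<exists>w. f (t + h) = fadd (f t) w \<and> fD (fscale (1 / h) w) g2 < e / 2"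
      "\<And>h. 0 < h \<Longrightarrow> h < d2 \<Longrightarrow> t - h \<in> {a..b} \<Longrightarrow>
        \<exists>w. f t = fadd (f (t - h)) w \<and> fD (fscale (1 / h) w) g2 < e / 2"
      using has_fhderivD[OF g2 e2] by blast
    define h where "h = min (min d1 d2) (b - a) / 2"
    have h: "0 < h" "h < d1" "h < d2" "h \<le> (b - a) / 2"
      using d1(1) d2(1) ab unfolding h_def by auto
    txt \<open>By cancellation the Hukuhara difference is unique, so both limits approximate
      the same difference quotient.\<close>
    have "\<exists>w. fD (fscale (1 / h) w) g1 < e / 2 \<and> fD (fscale (1 / h) w) g2 < e / 2"
    proof (cases "t + h \<in> {a..b}")
      case True
      obtain w1 w2 where "f (t + h) = fadd (f t) w1" "fD (fscale (1 / h) w1) g1 < e / 2"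
        "f (t + h) = fadd (f t) w2" "fD (fscale (1 / h) w2) g2 < e / 2"
        using d1(2)[OF h(1,2) True] d2(2)[OF h(1,3) True] by blast
      then show ?thesis using fadd_left_cancel by metis
    next
      case False
      then have left: "t - h \<in> {a..b}" using t h ab by auto
      obtain w1 w2 where "f t = fadd (f (t - h)) w1" "fD (fscale (1 / h) w1) g1 < e / 2"
        "f t = fadd (f (t - h)) w2" "fD (fscale (1 / h) w2) g2 < e / 2"
        using d1(3)[OF h(1,2) left] d2(3)[OF h(1,3) left] by blast
      then show ?thesis using fadd_left_cancel by metis
    qed
    then obtain q where "fD q g1 < e / 2" "fD q g2 < e / 2" by blast
    then show ?thesis using fD_triangle[of g1 g2 q] fD_commute[of g1 q] by linarith
  qed
  then have "fD g1 g2 \<le> 0" by (rule field_le_epsilon)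
  then show ?thesis using fD_nonneg[of g1 g2] fD_eq_0_imp_eq by (metis order.antisym)
qed

lemma fhderiv_eqI:
  assumes "a < b" "t \<in> {a..b}" "has_fhderiv_at {a..b} f g t"
  shows "fhderiv {a..b} f t = g"
  unfolding fhderiv_def using assms has_fhderiv_at_unique[OF assms(1,2)] by (auto intro: the_equality)

lemma fhderiv_outside: "t \<notin> S \<Longrightarrow> fhderiv S f t = fzero"
  unfolding fhderiv_def by simp

lemma has_fhderiv_at_const_fzero: "has_fhderiv_at S (\<lambda>s. fzero) fzero t"
  unfolding has_fhderiv_at_def
  by (intro allI impI exI[of _ 1]) (auto intro!: exI[of _ fzero] simp: fadd_fzero fscale_fzero fD_self)

lemma funpow_fhderiv_const_fzero:
  assumes "a < b"
  shows "(fhderiv {a..b} ^^ i) (\<lambda>s. fzero) = (\<lambda>s. fzero)"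
proof (induction i)
  case (Suc i)
  have "fhderiv {a..b} (\<lambda>s. fzero) t = fzero" for t
    using fhderiv_eqI[OF assms _ has_fhderiv_at_const_fzero] by (cases "t \<in> {a..b}") (auto simp: fhderiv_outside)
  then show ?case using Suc.IH by auto
qed simp

lemma has_fhderiv_at_fscale:
  assumes c: "c > 0" and g: "has_fhderiv_at S f g t"
  shows "has_fhderiv_at S (\<lambda>s. fscale c (f s)) (fscale c g) t"
  unfolding has_fhderiv_at_def
proof (intro allI impI)
  fix e :: real assume e: "e > 0"
  obtain d where d: "d > 0"
    "\<And>h. 0 < h \<Longrightarrow> h < d \<Longrightarrow> t + h \<in> S \<Longrightarrow>
      \<exists>w. f (t + h) = fadd (f t) w \<and> fD (fscale (1 / h) w) g < e / c"
    "\<And>h. 0 < h \<Longrightarrow> h < d \<Longrightarrow> t - h \<in> S \<Longrightarrow>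
      \<exists>w. f t = fadd (f (t - h)) w \<and> fD (fscale (1 / h) w) g < e / c"
    using has_fhderivD[OF g] e c by (metis divide_pos_pos)
  have quotient: "fD (fscale (1 / h) (fscale c w)) (fscale c g) < e"
    if "0 < h" "fD (fscale (1 / h) w) g < e / c" for h w
  proof -
    have "fD (fscale (1 / h) (fscale c w)) (fscale c g) = c * fD (fscale (1 / h) w) g"
      using fscale_commute[of "1 / h" c w] that(1) c fD_fscale[OF c] by simp
    also have "\<dots> < e" using that(2) c by (simp add: pos_less_divide_eq mult.commute)
    finally show ?thesis .
  qed
  show "\<exists>d>0. \<forall>h. 0 < h \<and> h < d \<longrightarrow>
        (t + h \<in> S \<longrightarrow> (\<exists>w. fscale c (f (t + h)) = fadd (fscale c (f t)) w \<and>
            fD (fscale (1 / h) w) (fscale c g) < e)) \<and>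
        (t - h \<in> S \<longrightarrow> (\<exists>w. fscale c (f t) = fadd (fscale c (f (t - h))) w \<and>
            fD (fscale (1 / h) w) (fscale c g) < e))"
  proof (intro exI[of _ d] conjI allI impI)
    fix h assume h: "0 < h \<and> h < d"
    show "\<exists>w. fscale c (f (t + h)) = fadd (fscale c (f t)) w \<and> fD (fscale (1 / h) w) (fscale c g) < e"
      if "t + h \<in> S"
      using d(2)[OF _ _ that] h quotient fscale_fadd[OF c] by metis
    show "\<exists>w. fscale c (f t) = fadd (fscale c (f (t - h))) w \<and> fD (fscale (1 / h) w) (fscale c g) < e"
      if "t - h \<in> S"
      using d(3)[OF _ _ that] h quotient fscale_fadd[OF c] by metis
  qed (rule d(1))
qed

lemma fcont_on_fscale:
  assumes c: "c > 0" and f: "fcont_on S f"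
  shows "fcont_on S (\<lambda>s. fscale c (f s))"
  unfolding fcont_on_def
proof (intro ballI allI impI)
  fix t e assume t: "t \<in> S" and e: "(e::real) > 0"
  obtain d where d: "d > 0" "\<forall>s\<in>S. \<bar>s - t\<bar> < d \<longrightarrow> fD (f s) (f t) < e / c"
    using f t e c unfolding fcont_on_def by (metis divide_pos_pos)
  then show "\<exists>d>0. \<forall>s\<in>S. \<bar>s - t\<bar> < d \<longrightarrow> fD (fscale c (f s)) (fscale c (f t)) < e"
    using c by (auto simp: fD_fscale pos_less_divide_eq mult.commute)
qed

lemma funpow_fhderiv_fscale:
  assumes ab: "a < b" and c: "c > 0" and f: "fCp_on p {a..b} f" and i: "i \<le> p"
  shows "(fhderiv {a..b} ^^ i) (\<lambda>s. fscale c (f s)) = (\<lambda>s. fscale c ((fhderiv {a..b} ^^ i) f s))"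
  using i
proof (induction i)
  case (Suc i)
  let ?G = "(fhderiv {a..b} ^^ i) f"
  have diff: "fhdifferentiable_on {a..b} ?G" using f Suc.prems unfolding fCp_on_def by simp
  have "fhderiv {a..b} (\<lambda>s. fscale c (?G s)) t = fscale c (fhderiv {a..b} ?G t)" for t
  proof (cases "t \<in> {a..b}")
    case True
    then obtain g where g: "has_fhderiv_at {a..b} ?G g t"
      using diff unfolding fhdifferentiable_on_def by blast
    show ?thesis
      using fhderiv_eqI[OF ab True g] fhderiv_eqI[OF ab True has_fhderiv_at_fscale[OF c g]] by simp
  next
    case False
    then show ?thesis by (simp add: fhderiv_outside fscale_fzero)
  qed
  then show ?case using Suc by auto
qed simp

lemma fCp_on_fscale:
  assumes ab: "a < b" and c: "c > 0" and f: "fCp_on p {a..b} f"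
  shows "fCp_on p {a..b} (\<lambda>s. fscale c (f s))"
  unfolding fCp_on_def
proof (intro conjI allI impI)
  fix i assume "i \<le> p"
  then show "fcont_on {a..b} ((fhderiv {a..b} ^^ i) (\<lambda>s. fscale c (f s)))"
    using f fcont_on_fscale[OF c] funpow_fhderiv_fscale[OF ab c f] unfolding fCp_on_def by simp
next
  fix i assume i: "i < p"
  then have "fhdifferentiable_on {a..b} ((fhderiv {a..b} ^^ i) f)" using f unfolding fCp_on_def by simp
  then show "fhdifferentiable_on {a..b} ((fhderiv {a..b} ^^ i) (\<lambda>s. fscale c (f s)))"
    unfolding funpow_fhderiv_fscale[OF ab c f less_imp_le[OF i]] fhdifferentiable_on_def
    using has_fhderiv_at_fscale[OF c] by blast
qed

section \<open>Positive homogeneity of the admissible spaces\<close>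

definition bzero :: felem where
  "bzero = (\<lambda>n t. fzero)"

definition bscale :: "real \<Rightarrow> felem \<Rightarrow> felem" where
  "bscale c y = (\<lambda>n t. fscale c (y n t))"

lemma bscale_ext_on: "bscale c (ext_on a b f) = ext_on a b (\<lambda>t. fscale c (f t))"
  unfolding bscale_def ext_on_def by (intro ext) (simp add: fscale_fzero)

lemma bdd_above_fD_fzero_fcont:
  assumes "fcont_on {a..b} g"
  shows "bdd_above ((\<lambda>t. fD fzero (g t)) ` {a..b})"
proof -
  have "continuous_on {a..b} (\<lambda>t. fD fzero (g t))"
    unfolding continuous_on_iff dist_real_def
  proof (intro ballI allI impI)
    fix t e assume "t \<in> {a..b}" "(e::real) > 0"
    then obtain d where "d > 0" "\<forall>s\<in>{a..b}. \<bar>s - t\<bar> < d \<longrightarrow> fD (g s) (g t) < e"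
      using assms unfolding fcont_on_def by blast
    moreover have "\<bar>fD fzero (g s) - fD fzero (g t)\<bar> \<le> fD (g s) (g t)" for s
      by (rule abs_fD_fzero_diff_le)
    ultimately show "\<exists>d>0. \<forall>s\<in>{a..b}. \<bar>s - t\<bar> < d \<longrightarrow> \<bar>fD fzero (g s) - fD fzero (g t)\<bar> < e"
      by (meson le_less_trans)
  qed
  then show ?thesis
    by (intro bounded_imp_bdd_above compact_imp_bounded compact_continuous_image compact_Icc)
qed

lemma SpRF_homogeneous:
  assumes c: "c > 0" and y: "y \<in> bcarrier SpRF"
  shows "bscale c y \<in> bcarrier SpRF"
    and "bdist SpRF bzero (bscale c y) = c * bdist SpRF bzero y"
    and "0 \<le> bdist SpRF bzero y"
proof -
  obtain u where u: "y = (\<lambda>n t. u)" using y by auto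
  show "bscale c y \<in> bcarrier SpRF" unfolding u bscale_def by auto
  show "bdist SpRF bzero (bscale c y) = c * bdist SpRF bzero y"
    unfolding u bscale_def bzero_def by (simp add: fD_fzero_fscale[OF c])
  show "0 \<le> bdist SpRF bzero y" by (simp add: fD_nonneg)
qed

lemma bdist_SpC_ext_on: "bdist (SpC a b) bzero (ext_on a b g) = (SUP t\<in>{a..b}. fD fzero (g t))"
  unfolding bzero_def ext_on_def by (auto intro: SUP_cong)

lemma SpC_homogeneous:
  assumes c: "c > 0" and ab: "a < b" and y: "y \<in> bcarrier (SpC a b)"
  shows "bscale c y \<in> bcarrier (SpC a b)"
    and "bdist (SpC a b) bzero (bscale c y) = c * bdist (SpC a b) bzero y"
    and "0 \<le> bdist (SpC a b) bzero y"
proof -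
  obtain f where f: "y = ext_on a b f" "fcont_on {a..b} f" using y by auto
  show "bscale c y \<in> bcarrier (SpC a b)"
    using fcont_on_fscale[OF c f(2)] unfolding f(1) bscale_ext_on by auto
  have ne: "{a..b} \<noteq> {}" using ab by simp
  note bdd = bdd_above_fD_fzero_fcont[OF f(2)]
  show "bdist (SpC a b) bzero (bscale c y) = c * bdist (SpC a b) bzero y"
    unfolding f(1) bscale_ext_on bdist_SpC_ext_on fD_fzero_fscale[OF c]
    by (rule cSUP_cmult[OF c ne bdd])
  show "0 \<le> bdist (SpC a b) bzero y"
    unfolding f(1) bdist_SpC_ext_on by (rule cSUP_nonneg[OF ne bdd fD_nonneg])
qed

lemma bdist_SpCp_ext_on:
  assumes "a < b"
  shows "bdist (SpCp p a b) bzero (ext_on a b g)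
       = (\<Sum>i\<le>p. SUP t\<in>{a..b}. fD fzero ((fhderiv {a..b} ^^ i) g t))"
proof -
  have "\<forall>s\<in>{a..b}. ext_on a b g 0 s = g s" unfolding ext_on_def by simp
  then have "\<forall>s\<in>{a..b}. (fhderiv {a..b} ^^ i) (ext_on a b g 0) s = (fhderiv {a..b} ^^ i) g s" for i
    by (rule funpow_fhderiv_cong_on)
  then show ?thesis
    unfolding bdist.simps bzero_def funpow_fhderiv_const_fzero[OF assms]
    by (intro sum.cong refl SUP_cong) auto
qed

lemma SpCp_homogeneous:
  assumes c: "c > 0" and ab: "a < b" and y: "y \<in> bcarrier (SpCp p a b)"
  shows "bscale c y \<in> bcarrier (SpCp p a b)"
    and "bdist (SpCp p a b) bzero (bscale c y) = c * bdist (SpCp p a b) bzero y"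
    and "0 \<le> bdist (SpCp p a b) bzero y"
proof -
  let ?D = "fhderiv {a..b}"
  obtain f where f: "y = ext_on a b f" "fCp_on p {a..b} f" using y by auto
  show "bscale c y \<in> bcarrier (SpCp p a b)"
    using fCp_on_fscale[OF ab c f(2)] unfolding f(1) bscale_ext_on by auto
  have ne: "{a..b} \<noteq> {}" using ab by simp
  have bdd: "bdd_above ((\<lambda>t. fD fzero ((?D ^^ i) f t)) ` {a..b})" if "i \<le> p" for i
    using f(2) that unfolding fCp_on_def by (intro bdd_above_fD_fzero_fcont) blast
  have "(SUP t\<in>{a..b}. fD fzero ((?D ^^ i) (\<lambda>t. fscale c (f t)) t))
      = c * (SUP t\<in>{a..b}. fD fzero ((?D ^^ i) f t))" if "i \<le> p" for i
    unfolding funpow_fhderiv_fscale[OF ab c f(2) that] fD_fzero_fscale[OF c]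
    by (rule cSUP_cmult[OF c ne bdd[OF that]])
  then show "bdist (SpCp p a b) bzero (bscale c y) = c * bdist (SpCp p a b) bzero y"
    unfolding f(1) bscale_ext_on bdist_SpCp_ext_on[OF ab] sum_distrib_left by simp
  show "0 \<le> bdist (SpCp p a b) bzero y"
    unfolding f(1) bdist_SpCp_ext_on[OF ab]
    by (intro sum_nonneg cSUP_nonneg[OF ne bdd fD_nonneg]) simp
qed

definition Lp_integral :: "real \<Rightarrow> real \<Rightarrow> real \<Rightarrow> (real \<Rightarrow> fuzzy) \<Rightarrow> ennreal" where
  "Lp_integral p a b f = (\<integral>\<^sup>+ t. indicator {a..b} t * ennreal (fD (f t) fzero powr p) \<partial>lborel)"

lemma Lp_integral_fscale:
  assumes c: "c > 0"
  shows "Lp_integral p a b (\<lambda>t. fscale c (f t)) = ennreal (c powr p) * Lp_integral p a b f"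
proof -
  have "fD (fscale c (f t)) fzero powr p = c powr p * fD (f t) fzero powr p" for t
    using c fD_nonneg[of "f t" fzero] fD_fzero_fscale[OF c] fD_commute by (simp add: powr_mult)
  then have "indicator {a..b} t * ennreal (fD (fscale c (f t)) fzero powr p)
      = ennreal (c powr p) * (indicator {a..b} t * ennreal (fD (f t) fzero powr p))" for t
    by (simp add: ennreal_mult ac_simps)
  then show ?thesis unfolding Lp_integral_def using nn_integral_cmult_pos[of "c powr p"] c by simp
qed

lemma bdist_SpL_ext_on: "bdist (SpL p a b) bzero (ext_on a b g) = enn2real (Lp_integral p a b g) powr (1 / p)"
proof -
  have "indicator {a..b} t * ennreal (fD (bzero 0 t) (ext_on a b g 0 t) powr p)
      = indicator {a..b} t * ennreal (fD (g t) fzero powr p)" for t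
    by (cases "t \<in> {a..b}") (auto simp: bzero_def ext_on_def fD_commute)
  then show ?thesis unfolding bdist.simps Lp_integral_def by simp
qed

lemma fmeasurable_on_fscale:
  assumes c: "c > 0" and f: "fmeasurable_on a b f"
  shows "fmeasurable_on a b (\<lambda>t. fscale c (f t))"
  using f c unfolding fmeasurable_on_def
  by (auto simp: lower_fscale upper_fscale intro!: borel_measurable_times)

lemma SpL_homogeneous:
  assumes c: "c > 0" and p: "1 \<le> p" and y: "y \<in> bcarrier (SpL p a b)"
  shows "bscale c y \<in> bcarrier (SpL p a b)"
    and "bdist (SpL p a b) bzero (bscale c y) = c * bdist (SpL p a b) bzero y"
    and "0 \<le> bdist (SpL p a b) bzero y"
proof -
  obtain f where f: "y = ext_on a b f" "fmeasurable_on a b f" "Lp_integral p a b f < \<infinity>"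
    using y unfolding Lp_integral_def by auto
  have "Lp_integral p a b (\<lambda>t. fscale c (f t)) < \<infinity>"
    unfolding Lp_integral_fscale[OF c] using f(3) by (simp add: ennreal_mult_less_top)
  then show "bscale c y \<in> bcarrier (SpL p a b)"
    using fmeasurable_on_fscale[OF c f(2)] unfolding f(1) bscale_ext_on Lp_integral_def by auto
  show "bdist (SpL p a b) bzero (bscale c y) = c * bdist (SpL p a b) bzero y"
    unfolding f(1) bscale_ext_on bdist_SpL_ext_on Lp_integral_fscale[OF c]
    using powr_cmult_root[of c p] c p by (simp add: enn2real_mult)
  show "0 \<le> bdist (SpL p a b) bzero y" by simp
qed

lemma Splp_homogeneous:
  assumes c: "c > 0" and p: "1 \<le> p" and y: "y \<in> bcarrier (Splp p)"
  shows "bscale c y \<in> bcarrier (Splp p)"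
    and "bdist (Splp p) bzero (bscale c y) = c * bdist (Splp p) bzero y"
    and "0 \<le> bdist (Splp p) bzero y"
proof -
  obtain x where x: "y = (\<lambda>n t. x n)" "summable (\<lambda>n. fD (x n) fzero powr p)" using y by auto
  have scaled: "fD (fscale c (x n)) fzero powr p = c powr p * fD (x n) fzero powr p" for n
    using c fD_nonneg[of "x n" fzero] fD_fzero_fscale[OF c] fD_commute by (simp add: powr_mult)
  have bsy: "bscale c (\<lambda>n t. x n) = (\<lambda>n t. fscale c (x n))" unfolding bscale_def ..
  have "summable (\<lambda>n. fD (fscale c (x n)) fzero powr p)"
    unfolding scaled by (rule summable_mult[OF x(2)])
  then show "bscale c y \<in> bcarrier (Splp p)"
    unfolding x(1) bsy by (auto intro!: exI[of _ "\<lambda>n. fscale c (x n)"])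
  have dist: "bdist (Splp p) bzero (\<lambda>n t. g n) = (\<Sum>n. fD (g n) fzero powr p) powr (1 / p)" for g
    unfolding bdist.simps bzero_def by (simp add: fD_commute)
  have "0 \<le> (\<Sum>n. fD (x n) fzero powr p)" by (rule suminf_nonneg[OF x(2)]) simp
  then show "bdist (Splp p) bzero (bscale c y) = c * bdist (Splp p) bzero y"
    unfolding x(1) bsy dist scaled suminf_mult[OF x(2)] using c p by (simp add: powr_cmult_root)
  show "0 \<le> bdist (Splp p) bzero y" unfolding x(1) dist by simp
qed

lemma sup_norm_homogeneous:
  assumes S: "S \<in> {Spm, Spc, Spc0}" and c: "c > 0"
    and bdd: "bdd_above (range (\<lambda>n. fD fzero (x n)))"
  shows "bdist S bzero (\<lambda>n t. fscale c (x n)) = c * bdist S bzero (\<lambda>n t. x n)"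
    and "0 \<le> bdist S bzero (\<lambda>n t. x n)"
proof -
  have dist: "bdist S bzero (\<lambda>n t. g n) = (SUP n. fD fzero (g n))" for g
    using S by (auto simp: bzero_def)
  show "bdist S bzero (\<lambda>n t. fscale c (x n)) = c * bdist S bzero (\<lambda>n t. x n)"
    unfolding dist fD_fzero_fscale[OF c] by (rule cSUP_cmult[OF c _ bdd]) simp
  show "0 \<le> bdist S bzero (\<lambda>n t. x n)"
    unfolding dist by (rule cSUP_nonneg[OF _ bdd fD_nonneg]) simp
qed

lemma bdd_above_fD_fzero_if_tendsto:
  assumes "(\<lambda>n. fD (x n) l) \<longlonglongrightarrow> 0"
  shows "bdd_above (range (\<lambda>n. fD fzero (x n)))"
proof -
  obtain M where M: "\<forall>n. fD (x n) l \<le> M"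
    using bounded_imp_bdd_above[OF convergent_imp_bounded[OF assms]] unfolding bdd_above_def by auto
  have "fD fzero (x n) \<le> fD fzero l + M" for n
    using fD_triangle[of fzero "x n" l] M fD_commute[of l "x n"] by (metis add_left_mono order.trans)
  then show ?thesis by (intro bdd_aboveI2) blast
qed

lemma Spm_homogeneous:
  assumes c: "c > 0" and y: "y \<in> bcarrier Spm"
  shows "bscale c y \<in> bcarrier Spm"
    and "bdist Spm bzero (bscale c y) = c * bdist Spm bzero y"
    and "0 \<le> bdist Spm bzero y"
proof -
  obtain x B where x: "y = (\<lambda>n t. x n)" "\<forall>n. fD (x n) fzero \<le> B" using y by auto
  have bsy: "bscale c (\<lambda>n t. x n) = (\<lambda>n t. fscale c (x n))" unfolding bscale_def ..
  have "\<forall>n. fD (fscale c (x n)) fzero \<le> c * B"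
    using x(2) c fD_fzero_fscale[OF c] fD_commute by (simp add: mult_left_mono)
  then show "bscale c y \<in> bcarrier Spm"
    unfolding x(1) bsy by (auto intro!: exI[of _ "\<lambda>n. fscale c (x n)"])
  have "bdd_above (range (\<lambda>n. fD fzero (x n)))"
    using x(2) fD_commute by (intro bdd_aboveI2[where M = B]) metis
  then show "bdist Spm bzero (bscale c y) = c * bdist Spm bzero y" "0 \<le> bdist Spm bzero y"
    unfolding x(1) bsy using sup_norm_homogeneous[of Spm, OF _ c] by auto
qed

lemma Spc_homogeneous:
  assumes c: "c > 0" and y: "y \<in> bcarrier Spc"
  shows "bscale c y \<in> bcarrier Spc"
    and "bdist Spc bzero (bscale c y) = c * bdist Spc bzero y"
    and "0 \<le> bdist Spc bzero y"
proof -
  obtain x l where x: "y = (\<lambda>n t. x n)" "(\<lambda>n. fD (x n) l) \<longlonglongrightarrow> 0" using y by auto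
  have bsy: "bscale c (\<lambda>n t. x n) = (\<lambda>n t. fscale c (x n))" unfolding bscale_def ..
  have "(\<lambda>n. c * fD (x n) l) \<longlonglongrightarrow> c * 0" by (intro tendsto_intros x(2))
  then have "(\<lambda>n. fD (fscale c (x n)) (fscale c l)) \<longlonglongrightarrow> 0" by (simp add: fD_fscale[OF c])
  then show "bscale c y \<in> bcarrier Spc"
    unfolding x(1) bsy by (auto intro!: exI[of _ "\<lambda>n. fscale c (x n)"] exI[of _ "fscale c l"])
  show "bdist Spc bzero (bscale c y) = c * bdist Spc bzero y" "0 \<le> bdist Spc bzero y"
    unfolding x(1) bsy using sup_norm_homogeneous[of Spc, OF _ c bdd_above_fD_fzero_if_tendsto[OF x(2)]]
    by auto
qed

lemma Spc0_homogeneous: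
  assumes c: "c > 0" and y: "y \<in> bcarrier Spc0"
  shows "bscale c y \<in> bcarrier Spc0"
    and "bdist Spc0 bzero (bscale c y) = c * bdist Spc0 bzero y"
    and "0 \<le> bdist Spc0 bzero y"
proof -
  obtain x where x: "y = (\<lambda>n t. x n)" "(\<lambda>n. fD (x n) fzero) \<longlonglongrightarrow> 0" using y by auto
  have bsy: "bscale c (\<lambda>n t. x n) = (\<lambda>n t. fscale c (x n))" unfolding bscale_def ..
  have "(\<lambda>n. c * fD (x n) fzero) \<longlonglongrightarrow> c * 0" by (intro tendsto_intros x(2))
  then have "(\<lambda>n. fD (fscale c (x n)) fzero) \<longlonglongrightarrow> 0"
    by (simp add: fD_fzero_fscale[OF c] fD_commute)
  then show "bscale c y \<in> bcarrier Spc0"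
    unfolding x(1) bsy by (auto intro!: exI[of _ "\<lambda>n. fscale c (x n)"])
  show "bdist Spc0 bzero (bscale c y) = c * bdist Spc0 bzero y" "0 \<le> bdist Spc0 bzero y"
    unfolding x(1) bsy using sup_norm_homogeneous[of Spc0, OF _ c bdd_above_fD_fzero_if_tendsto[OF x(2)]]
    by auto
qed

lemma fspace_homogeneous:
  assumes "valid_fspace S" "c > 0" "y \<in> bcarrier S"
  shows "bscale c y \<in> bcarrier S \<and> bdist S bzero (bscale c y) = c * bdist S bzero y \<and>
    0 \<le> bdist S bzero y"
proof (cases S)
  case SpRF then show ?thesis using SpRF_homogeneous assms by simp
next
  case SpC then show ?thesis using SpC_homogeneous assms by simp
next
  case SpL then show ?thesis using SpL_homogeneous assms by simp
next
  case SpCp then show ?thesis using SpCp_homogeneous assms by simp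
next
  case Splp then show ?thesis using Splp_homogeneous assms by simp
next
  case Spm then show ?thesis using Spm_homogeneous assms by simp
next
  case Spc then show ?thesis using Spc_homogeneous assms by simp
next
  case Spc0 then show ?thesis using Spc0_homogeneous assms by simp
qed

lemma bzero_in_bcarrier:
  assumes "valid_fspace S"
  shows "bzero \<in> bcarrier S"
proof -
  have ext_fzero: "bzero = ext_on a b (\<lambda>t. fzero)" for a b
    unfolding ext_on_def bzero_def by simp
  have const_seq: "bzero = (\<lambda>n t. fzero)" unfolding bzero_def ..
  show ?thesis
  proof (cases S)
    case (SpC a b)
    have "fcont_on {a..b} (\<lambda>t. fzero)" unfolding fcont_on_def by (auto simp: fD_self)
    then show ?thesis using SpC ext_fzero by auto
  next
    case (SpL p a b)
    have "fmeasurable_on a b (\<lambda>t. fzero)" unfolding fmeasurable_on_def by simp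
    then show ?thesis using SpL ext_fzero by (auto simp: fD_self intro!: exI[of _ "\<lambda>t. fzero"])
  next
    case (SpCp p a b)
    then have ab: "a < b" using assms by simp
    have "fCp_on p {a..b} (\<lambda>t. fzero)"
      unfolding fCp_on_def funpow_fhderiv_const_fzero[OF ab] fcont_on_def fhdifferentiable_on_def
      using has_fhderiv_at_const_fzero by (auto simp: fD_self)
    then show ?thesis using SpCp ext_fzero by auto
  qed (auto simp: const_seq fD_self intro!: exI[of _ "\<lambda>n. fzero"] exI[of _ fzero])
qed

section \<open>Finite products and operator norms\<close>

lemma pscale_apply: "pscale c x i = bscale c (x i)"
  by (simp add: pscale_def bscale_def)

lemma pzero_apply: "pzero i = bzero"
  by (simp add: pzero_def bzero_def)

lemma pscale_0: "pscale 0 x = pzero"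
  unfolding pscale_def pzero_def fscale_def by simp

lemma pzero_in_pcarrier: "\<forall>S\<in>set Ss. valid_fspace S \<Longrightarrow> pzero \<in> pcarrier Ss"
  unfolding pcarrier_def pzero_apply using bzero_in_bcarrier by (simp add: bzero_def[symmetric])

lemma pscale_in_pcarrier:
  assumes "\<forall>S\<in>set Ss. valid_fspace S" "c > 0" "x \<in> pcarrier Ss"
  shows "pscale c x \<in> pcarrier Ss"
  using assms fspace_homogeneous unfolding pcarrier_def pscale_apply
  by (auto simp: bscale_def fscale_fzero)

lemma pnorm_eq_Max: "pnorm Ss x = Max ((\<lambda>i. bdist (Ss ! i) bzero (x i)) ` {..<length Ss})"
proof -
  have "{bdist (Ss ! i) (pzero i) (x i) |i. i < length Ss} = (\<lambda>i. bdist (Ss ! i) bzero (x i)) ` {..<length Ss}"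
    unfolding pzero_apply by auto
  then show ?thesis unfolding pnorm_def pdist_def by simp
qed

lemma pnorm_pscale:
  assumes valid: "\<forall>S\<in>set Ss. valid_fspace S" and ne: "Ss \<noteq> []" and c: "c > 0"
    and x: "x \<in> pcarrier Ss"
  shows "pnorm Ss (pscale c x) = c * pnorm Ss x"
proof -
  let ?g = "\<lambda>i. bdist (Ss ! i) bzero (x i)"
  have "bdist (Ss ! i) bzero (pscale c x i) = c * ?g i" if "i < length Ss" for i
    using fspace_homogeneous[OF _ c, of "Ss ! i" "x i"] valid x that
    unfolding pscale_apply pcarrier_def by auto
  then have "(\<lambda>i. bdist (Ss ! i) bzero (pscale c x i)) ` {..<length Ss} = (*) c ` ?g ` {..<length Ss}"
    by (auto simp: image_image)
  moreover have "c * Max (?g ` {..<length Ss}) = Max ((*) c ` ?g ` {..<length Ss})"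
    using c ne by (intro mono_Max_commute) (auto simp: mono_def)
  ultimately show ?thesis unfolding pnorm_eq_Max by simp
qed

lemma pnorm_nonneg:
  assumes valid: "\<forall>S\<in>set Ss. valid_fspace S" and ne: "Ss \<noteq> []" and x: "x \<in> pcarrier Ss"
  shows "0 \<le> pnorm Ss x"
proof -
  have "0 \<le> bdist (Ss ! 0) bzero (x 0)"
    using fspace_homogeneous[of "Ss ! 0" 1 "x 0"] valid x ne unfolding pcarrier_def by simp
  also have "\<dots> \<le> pnorm Ss x"
    unfolding pnorm_eq_Max using ne by (intro Max_ge) auto
  finally show ?thesis .
qed

lemma homogeneous_pair_pcarrier:
  assumes "\<forall>S\<in>set Ss. valid_fspace S" "Ss \<noteq> []"
    and "\<And>x c. x \<in> pcarrier Ss \<Longrightarrow> c > 0 \<Longrightarrow> phi (pscale c x) = c * phi x"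
    and "\<And>x. x \<in> pcarrier Ss \<Longrightarrow> 0 \<le> phi x"
  shows "homogeneous_pair (pcarrier Ss) pscale (pnorm Ss) phi"
  using assms pzero_in_pcarrier pscale_in_pcarrier pnorm_pscale pnorm_nonneg
  by unfold_locales blast+

lemma opnorm_functional:
  assumes ne: "Ss \<noteq> []" and valid: "\<forall>S\<in>set Ss. valid_fspace S"
    and lin: "lin_functional Ss A" and cont: "cont_at_zero_functional Ss A"
  shows "\<forall>x\<in>pcarrier Ss. \<bar>A x\<bar> \<le> opnorm_functional Ss A * pnorm Ss x"
    and "opnorm_functional Ss A = Sup {\<bar>A x\<bar> | x. x \<in> pcarrier Ss \<and> pnorm Ss x \<le> 1}"
proof -
  interpret homogeneous_pair "pcarrier Ss" pscale "pnorm Ss" "\<lambda>x. \<bar>A x\<bar>"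
    using lin by (intro homogeneous_pair_pcarrier[OF valid ne]) (auto simp: lin_functional_def abs_mult)
  have "A (pscale 0 pzero) = 0 * A pzero"
    using lin pzero_in_pcarrier[OF valid] unfolding lin_functional_def by blast
  then have "A pzero = 0" by (simp add: pscale_0)
  moreover obtain \<delta> where "\<delta> > 0" "\<forall>x\<in>pcarrier Ss. pnorm Ss x < \<delta> \<longrightarrow> \<bar>A x - A pzero\<bar> < 1"
    using cont unfolding cont_at_zero_functional_def pnorm_def by (meson zero_less_one)
  ultimately have "bounds \<noteq> {}" using bound_if_small_near_zero by fastforce
  then show "\<forall>x\<in>pcarrier Ss. \<bar>A x\<bar> \<le> opnorm_functional Ss A * pnorm Ss x"
    and "opnorm_functional Ss A = Sup {\<bar>A x\<bar> | x. x \<in> pcarrier Ss \<and> pnorm Ss x \<le> 1}"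
    unfolding opnorm_functional_def using le_Inf_bounds Inf_bounds_eq_Sup_unit_ball by auto
qed

lemma opnorm_operator:
  assumes ne: "Ss \<noteq> []" and valid: "\<forall>S\<in>set Ss. valid_fspace S"
    and lin: "lin_operator Ss A" and cont: "cont_at_zero_operator Ss A"
  shows "\<forall>x\<in>pcarrier Ss. pnorm Ss (A x) \<le> opnorm_operator Ss A * pnorm Ss x"
    and "opnorm_operator Ss A = Sup {pnorm Ss (A x) | x. x \<in> pcarrier Ss \<and> pnorm Ss x \<le> 1}"
proof -
  have A_in: "A x \<in> pcarrier Ss" if "x \<in> pcarrier Ss" for x
    using lin that unfolding lin_operator_def by blast
  interpret homogeneous_pair "pcarrier Ss" pscale "pnorm Ss" "\<lambda>x. pnorm Ss (A x)"
    using lin A_in by (intro homogeneous_pair_pcarrier[OF valid ne])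
      (auto simp: lin_operator_def pnorm_pscale[OF valid ne] pnorm_nonneg[OF valid ne])
  have "A pzero = pzero"
    using lin pzero_in_pcarrier[OF valid] pscale_0 unfolding lin_operator_def by metis
  moreover obtain \<delta> where "\<delta> > 0" "\<forall>x\<in>pcarrier Ss. pnorm Ss x < \<delta> \<longrightarrow> pdist Ss (A pzero) (A x) < 1"
    using cont unfolding cont_at_zero_operator_def pnorm_def by (meson zero_less_one)
  ultimately have "bounds \<noteq> {}" using bound_if_small_near_zero unfolding pnorm_def by fastforce
  then show "\<forall>x\<in>pcarrier Ss. pnorm Ss (A x) \<le> opnorm_operator Ss A * pnorm Ss x"
    and "opnorm_operator Ss A = Sup {pnorm Ss (A x) | x. x \<in> pcarrier Ss \<and> pnorm Ss x \<le> 1}"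
    unfolding opnorm_operator_def using le_Inf_bounds Inf_bounds_eq_Sup_unit_ball by auto
qed

theorem theorem3p3:
  fixes Ss :: "fspace list"
  assumes "Ss \<noteq> []" and "\<forall>S\<in>set Ss. valid_fspace S"
  shows "(\<forall>A :: pelem \<Rightarrow> real.
            lin_functional Ss A \<and> cont_at_zero_functional Ss A \<longrightarrow>
              (\<forall>x\<in>pcarrier Ss. \<bar>A x\<bar> \<le> opnorm_functional Ss A * pnorm Ss x) \<and>
              opnorm_functional Ss A = Sup {\<bar>A x\<bar> | x. x \<in> pcarrier Ss \<and> pnorm Ss x \<le> 1})
       \<and> (\<forall>A :: pelem \<Rightarrow> pelem.
            lin_operator Ss A \<and> cont_at_zero_operator Ss A \<longrightarrow>
              (\<forall>x\<in>pcarrier Ss. pnorm Ss (A x) \<le> opnorm_operator Ss A * pnorm Ss x) \<and>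
              opnorm_operator Ss A = Sup {pnorm Ss (A x) | x. x \<in> pcarrier Ss \<and> pnorm Ss x \<le> 1})"
  using opnorm_functional[OF assms] opnorm_operator[OF assms] by blast

end
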